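(* The family of logics $\mathrm{FO}$ is $\mathbb{T}^\times$-compositional and also $\mathbb{T}$-compositional.
   Context: Sorts are $\Xi=\omega$ (arities). For an $\omega$-sorted family of partial orders $A$ and $n<\omega$, $\mathbb{T}^\times_nA$ is the set of finite or infinite trees with ordered successors labelled by elements of $A$ or variables $x_0,\dots,x_{n-1}$ (arity $0$), where a vertex with label in $A_k$ has exactly $k$ successors, variables label leaves only, and the root is labelled by an element of $A$; ordered by same shape and vertexwise comparison of labels. $\mathbb{T}A\subseteq\mathbb{T}^\times A$ consists of the trees using each variable at most once. $\mathbb{T}^\times$ is a monad with $\mathrm{sing}(a)=a(x_0,\dots,x_{n-1})$ and $\mathrm{flat}$ given by substituting, for each vertex $v$ of a tree of trees, the tree $T(v)$ with its $x_i$-leaves linked to the root of the tree at the $(i+1)$-st successor of $v$ and unravelling; $\mathbb{T}$ is a submonad. For an alphabet (finite unordered set) $\Sigma$, a tree $t$ of sort $n$ is identified with the structure $\langle\mathrm{dom}(t),\preceq,(S_i)_{i<\omega},(P_c)_{c\in\Sigma},(Q_i)_{i<n},R\rangle$ (tree order, successor relations, label predicates, variable predicates, root). FO is the family of logics assigning to $\Sigma$ the first-order sentences over this signature, a sentence of sort $n$ being evaluated on trees of sort $n$. For a monad $\mathbb{M}\in\{\mathbb{T},\mathbb{T}^\times\}$ and a set $\Delta$ of formulae, $s\sqsubseteq_\Delta t$ iff every formula in $\Delta$ satisfied by $s$ is satisfied by $t$. A preorder $\sqsubseteq$ on $\mathbb{M}\Sigma$ is a congruence ordering if $\mathbb{M}q(S)\leq\mathbb{M}q(T)$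 implies $\mathrm{flat}(S)\sqsubseteq\mathrm{flat}(T)$ for $S,T\in\mathbb{M}\mathbb{M}\Sigma$, $q$ the quotient map onto the ordered set of classes. A family of logics $L$ is $\mathbb{M}$-compositional if for every finite subfamily $\Phi$ (finitely many formulae per alphabet) there is $\Delta$ with $\Phi\subseteq\Delta\subseteq L$, finite in each sort for each alphabet up to equivalence, such that $\sqsubseteq_{\Delta[\Sigma]}$ is a congruence ordering on $\mathbb{M}\Sigma$ for every alphabet $\Sigma$. *)

theory Defs
  imports Main "HOL-Library.Sublist"
begin

text \<open>Elements of an omega-sorted family are represented as pairs
(a, k) where k is the sort (= arity).  A tree is a partial function from positions
(lists of successor indices, root = []) to labels; None means "not a vertex".\<close>

datatype 'a lab = Sym 'a | Var nat

type_synonym 'a tree = "nat list \<Rightarrow> 'a lab option"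

text \<open>Well-formed trees of sort n with labels from the sorted family A.
 If lin is True, each variable is used at most once (monad T), otherwise
 arbitrary (monad T^x).\<close>
definition wf_tree :: "bool \<Rightarrow> ('b \<times> nat) set \<Rightarrow> nat \<Rightarrow> ('b \<times> nat) tree \<Rightarrow> bool" where
  "wf_tree lin A n t \<longleftrightarrow>
     (\<exists>a\<in>A. t [] = Some (Sym a)) \<and>
     (\<forall>w a. t w = Some (Sym a) \<longrightarrow> a \<in> A \<and> (\<forall>i. t (w @ [i]) \<noteq> None \<longleftrightarrow> i < snd a)) \<and>
     (\<forall>w j. t w = Some (Var j) \<longrightarrow> j < n \<and> (\<forall>i. t (w @ [i]) = None)) \<and>
     (\<forall>w i. t (w @ [i]) \<noteq> None \<longrightarrow> t w \<noteq> None) \<and>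
     (lin \<longrightarrow> (\<forall>w w' j. t w = Some (Var j) \<and> t w' = Some (Var j) \<longrightarrow> w = w'))"

definition trees_sorted :: "bool \<Rightarrow> ('c \<times> nat) set \<Rightarrow> (('c \<times> nat) tree \<times> nat) set" where
  "trees_sorted lin \<Sigma> = {(s, k). wf_tree lin \<Sigma> k s}"

definition tree_le :: "('a \<Rightarrow> 'a \<Rightarrow> bool) \<Rightarrow> 'a tree \<Rightarrow> 'a tree \<Rightarrow> bool" where
  "tree_le le s t \<longleftrightarrow> (\<forall>w. rel_option (rel_lab le) (s w) (t w))"

definition map_tree :: "('a \<Rightarrow> 'b) \<Rightarrow> 'a tree \<Rightarrow> 'b tree" where
  "map_tree f t = (\<lambda>w. map_option (map_lab f) (t w))"

definition is_var :: "'a lab option \<Rightarrow> bool" where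
  "is_var x \<longleftrightarrow> (\<exists>i. x = Some (Var i))"

text \<open>go f S u w: label at position w of the unravelled tree obtained by substitution,
 starting at vertex u of the tree of trees S (f is fuel, decreasing).  When the walk
 through the tree T = S(u) reaches an x_i-leaf, it continues at the root of the tree
 at the (i+1)-st (0-indexed: i-th) successor u@[i] of u.\<close>
fun go :: "nat \<Rightarrow> (('c \<times> nat) tree \<times> nat) tree \<Rightarrow> nat list \<Rightarrow> nat list \<Rightarrow> ('c \<times> nat) lab option" where
  "go 0 S u w = None"
| "go (Suc f) S u w =
     (case S u of
        None \<Rightarrow> None
      | Some (Var j) \<Rightarrow> (if w = [] then Some (Var j) else None)
      | Some (Sym (T, k)) \<Rightarrow>
          (case T w of
             Some (Sym a) \<Rightarrow> Some (Sym a)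
           | _ \<Rightarrow>
             (case find (\<lambda>l. is_var (T (take l w))) [1..<Suc (length w)] of
                None \<Rightarrow> None
              | Some l \<Rightarrow> (case T (take l w) of
                            Some (Var i) \<Rightarrow> go f S (u @ [i]) (drop l w)
                          | _ \<Rightarrow> None))))"

definition flat :: "(('c \<times> nat) tree \<times> nat) tree \<Rightarrow> ('c \<times> nat) tree" where
  "flat S = (\<lambda>w. go (Suc (length w)) S [] w)"

datatype 'a fo =
    Eqf nat nat
  | Lef nat nat
  | Succf nat nat nat
  | Labf 'a nat
  | VarPf nat nat
  | Rootf nat
  | Negf "'a fo"
  | Conjf "'a fo" "'a fo"
  | Exf nat "'a fo"

fun holds :: "'a tree \<Rightarrow> (nat \<Rightarrow> nat list) \<Rightarrow> 'a fo \<Rightarrow> bool" where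
  "holds t e (Eqf x y) \<longleftrightarrow> e x = e y"
| "holds t e (Lef x y) \<longleftrightarrow> prefix (e x) (e y)"
| "holds t e (Succf i x y) \<longleftrightarrow> e y = e x @ [i]"
| "holds t e (Labf c x) \<longleftrightarrow> t (e x) = Some (Sym c)"
| "holds t e (VarPf i x) \<longleftrightarrow> t (e x) = Some (Var i)"
| "holds t e (Rootf x) \<longleftrightarrow> e x = []"
| "holds t e (Negf \<phi>) \<longleftrightarrow> \<not> holds t e \<phi>"
| "holds t e (Conjf \<phi> \<psi>) \<longleftrightarrow> holds t e \<phi> \<and> holds t e \<psi>"
| "holds t e (Exf x \<phi>) \<longleftrightarrow> (\<exists>w. t w \<noteq> None \<and> holds t (e(x := w)) \<phi>)"

fun fv :: "'a fo \<Rightarrow> nat set" where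
  "fv (Eqf x y) = {x, y}"
| "fv (Lef x y) = {x, y}"
| "fv (Succf i x y) = {x, y}"
| "fv (Labf c x) = {x}"
| "fv (VarPf i x) = {x}"
| "fv (Rootf x) = {x}"
| "fv (Negf \<phi>) = fv \<phi>"
| "fv (Conjf \<phi> \<psi>) = fv \<phi> \<union> fv \<psi>"
| "fv (Exf x \<phi>) = fv \<phi> - {x}"

fun syms :: "'a fo \<Rightarrow> 'a set" where
  "syms (Labf c x) = {c}"
| "syms (Negf \<phi>) = syms \<phi>"
| "syms (Conjf \<phi> \<psi>) = syms \<phi> \<union> syms \<psi>"
| "syms (Exf x \<phi>) = syms \<phi>"
| "syms _ = {}"

fun qvars :: "'a fo \<Rightarrow> nat set" where
  "qvars (VarPf i x) = {i}"
| "qvars (Negf \<phi>) = qvars \<phi>"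
| "qvars (Conjf \<phi> \<psi>) = qvars \<phi> \<union> qvars \<psi>"
| "qvars (Exf x \<phi>) = qvars \<phi>"
| "qvars _ = {}"

text \<open>A sentence is evaluated with an arbitrary (irrelevant) environment.\<close>
definition models :: "'a tree \<Rightarrow> 'a fo \<Rightarrow> bool" where
  "models t \<phi> \<longleftrightarrow> holds t (\<lambda>_. []) \<phi>"

definition FO :: "('c \<times> nat) set \<Rightarrow> (nat \<times> ('c \<times> nat) fo) set" where
  "FO \<Sigma> = {(n, \<phi>). fv \<phi> = {} \<and> syms \<phi> \<subseteq> \<Sigma> \<and> (\<forall>i\<in>qvars \<phi>. i < n)}"

definition sq :: "(nat \<times> 'a fo) set \<Rightarrow> nat \<Rightarrow> 'a tree \<Rightarrow> 'a tree \<Rightarrow> bool" where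
  "sq \<Delta> n s t \<longleftrightarrow> (\<forall>\<phi>. (n, \<phi>) \<in> \<Delta> \<longrightarrow> models s \<phi> \<longrightarrow> models t \<phi>)"

definition qcls :: "bool \<Rightarrow> ('c \<times> nat) set \<Rightarrow> (nat \<times> ('c \<times> nat) fo) set \<Rightarrow> nat
                    \<Rightarrow> ('c \<times> nat) tree \<Rightarrow> ('c \<times> nat) tree set" where
  "qcls lin \<Sigma> \<Delta> k s = {t. wf_tree lin \<Sigma> k t \<and> sq \<Delta> k s t \<and> sq \<Delta> k t s}"

definition cls_le :: "(nat \<times> 'a fo) set \<Rightarrow> ('a tree set \<times> nat) \<Rightarrow> ('a tree set \<times> nat) \<Rightarrow> bool" where
  "cls_le \<Delta> X Y \<longleftrightarrow> snd X = snd Y \<and> (\<exists>s\<in>fst X. \<exists>t\<in>fst Y. sq \<Delta> (snd X) s t)"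

definition congruence_ordering :: "bool \<Rightarrow> ('c \<times> nat) set \<Rightarrow> (nat \<times> ('c \<times> nat) fo) set \<Rightarrow> bool" where
  "congruence_ordering lin \<Sigma> \<Delta> \<longleftrightarrow>
     (\<forall>n S T. wf_tree lin (trees_sorted lin \<Sigma>) n S \<longrightarrow> wf_tree lin (trees_sorted lin \<Sigma>) n T \<longrightarrow>
        tree_le (cls_le \<Delta>) (map_tree (\<lambda>(s, k). (qcls lin \<Sigma> \<Delta> k s, k)) S)
                           (map_tree (\<lambda>(s, k). (qcls lin \<Sigma> \<Delta> k s, k)) T) \<longrightarrow>
        sq \<Delta> n (flat S) (flat T))"

text \<open>Models of a sentence among trees of sort n (in the monad); used for "up to equivalence".\<close>
definition mods :: "bool \<Rightarrow> ('c \<times> nat) set \<Rightarrow> nat \<Rightarrow> ('c \<times> nat) fo \<Rightarrow> ('c \<times> nat) tree set" where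
  "mods lin \<Sigma> n \<phi> = {t. wf_tree lin \<Sigma> n t \<and> models t \<phi>}"

definition compositional :: "bool \<Rightarrow> (('c \<times> nat) set \<Rightarrow> (nat \<times> ('c \<times> nat) fo) set) \<Rightarrow> bool" where
  "compositional lin L \<longleftrightarrow>
     (\<forall>\<Phi>. (\<forall>\<Sigma>. finite \<Sigma> \<longrightarrow> finite (\<Phi> \<Sigma>) \<and> \<Phi> \<Sigma> \<subseteq> L \<Sigma>) \<longrightarrow>
       (\<exists>\<Delta>. \<forall>\<Sigma>. finite \<Sigma> \<longrightarrow>
           \<Phi> \<Sigma> \<subseteq> \<Delta> \<Sigma> \<and> \<Delta> \<Sigma> \<subseteq> L \<Sigma> \<and>
           (\<forall>n. finite ((\<lambda>(m, \<phi>). mods lin \<Sigma> n \<phi>) ` {p \<in> \<Delta> \<Sigma>. fst p = n})) \<and>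
           congruence_ordering lin \<Sigma> (\<Delta> \<Sigma>)))"

end

theory Submission
  imports Defs "HOL-Library.FuncSet"
begin

(* Given finitely many sentences, let V collect their bound variables and let r exceed their
   quantifier ranks; Delta consists of all FO sentences of rank at most r whose bound variables lie
   in V.  Such sentences are invariant under the r-round Ehrenfeucht-Fraisse game played with the
   pebbles V.  Over a finite alphabet there are finitely many Hintikka sentences of rank r for this
   game: every tree satisfies one of them, trees satisfying the same one are game equivalent, and
   hence every sentence of Delta is equivalent to a disjunction of them.  In particular two
   components that are comparable for the preorder of Delta satisfy the same Hintikka sentence,
   so duplicator wins the game on every pair of corresponding components of the trees of trees
   S and T.  These strategies compose to a strategy on flat S and flat T: a vertex of flat S is
   determined by the path of components it passes through and a vertex of the last one, and
   duplicator keeps, in every component on the path of a pebble, a winning position of the game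
   on that component. *)

section \<open>Ehrenfeucht-Fraisse games on trees\<close>

text \<open>\<open>pe x = Some w\<close> means that pebble x lies on vertex w.  Pebbles are picked up and
  placed again, which is how bound variables are reused in formulas.\<close>

type_synonym pebbles = "nat \<Rightarrow> nat list option"

definition partial_iso :: "nat set \<Rightarrow> 'a tree \<Rightarrow> pebbles \<Rightarrow> 'a tree \<Rightarrow> pebbles \<Rightarrow> bool" where
  "partial_iso V t pe t' pe' \<longleftrightarrow> (\<forall>x\<in>V. (pe x = None \<longleftrightarrow> pe' x = None) \<and>
     (\<forall>y\<in>V. \<forall>a a' b b'. pe x = Some a \<longrightarrow> pe' x = Some a' \<longrightarrow> pe y = Some b \<longrightarrow> pe' y = Some b' \<longrightarrow>
        t a = t' a' \<and> (a = [] \<longleftrightarrow> a' = []) \<and> (a = b \<longleftrightarrow> a' = b') \<and>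
        (prefix a b \<longleftrightarrow> prefix a' b') \<and> (\<forall>i. b = a @ [i] \<longleftrightarrow> b' = a' @ [i])))"

lemma partial_iso_None_iff:
  "partial_iso V t pe t' pe' \<Longrightarrow> x \<in> V \<Longrightarrow> pe x = None \<longleftrightarrow> pe' x = None"
  unfolding partial_iso_def by blast

lemma partial_isoD:
  assumes "partial_iso V t pe t' pe'" "x \<in> V" "y \<in> V" "pe x = Some a" "pe y = Some b"
    "pe' x = Some a'" "pe' y = Some b'"
  shows "t a = t' a'" "a = [] \<longleftrightarrow> a' = []" "a = b \<longleftrightarrow> a' = b'" "prefix a b \<longleftrightarrow> prefix a' b'"
    "b = a @ [i] \<longleftrightarrow> b' = a' @ [i]"
proof -
  have "t a = t' a' \<and> (a = [] \<longleftrightarrow> a' = []) \<and> (a = b \<longleftrightarrow> a' = b') \<and>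
      (prefix a b \<longleftrightarrow> prefix a' b') \<and> (\<forall>i. b = a @ [i] \<longleftrightarrow> b' = a' @ [i])"
    using assms unfolding partial_iso_def by blast
  then show "t a = t' a'" "a = [] \<longleftrightarrow> a' = []" "a = b \<longleftrightarrow> a' = b'" "prefix a b \<longleftrightarrow> prefix a' b'"
    "b = a @ [i] \<longleftrightarrow> b' = a' @ [i]"
    by simp_all
qed

lemma partial_iso_fun_upd_label:
  assumes "partial_iso V t (pe(x:=Some w)) t' (pe'(x:=Some w'))" "x \<in> V"
  shows "t w = t' w'"
  using partial_isoD(1)[OF assms(1,2,2)] by simp

lemma partial_iso_pebbled_pair:
  assumes "partial_iso V t pe t' pe'" "{x, y} \<subseteq> {z\<in>V. pe z \<noteq> None}"
  obtains a b a' b' where "pe x = Some a" "pe y = Some b" "pe' x = Some a'" "pe' y = Some b'"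
    "t a = t' a'" "a = [] \<longleftrightarrow> a' = []" "a = b \<longleftrightarrow> a' = b'" "prefix a b \<longleftrightarrow> prefix a' b'"
    "\<And>i. b = a @ [i] \<longleftrightarrow> b' = a' @ [i]"
proof -
  have xy: "x \<in> V" "y \<in> V"
    using assms(2) by auto
  obtain a b a' b' where ab: "pe x = Some a" "pe y = Some b" "pe' x = Some a'" "pe' y = Some b'"
    using assms(2) partial_iso_None_iff[OF assms(1)] by fastforce
  show ?thesis
    by (rule that[OF ab partial_isoD[OF assms(1) xy ab]])
qed

fun ef_equiv :: "nat set \<Rightarrow> nat \<Rightarrow> 'a tree \<Rightarrow> pebbles \<Rightarrow> 'a tree \<Rightarrow> pebbles \<Rightarrow> bool" where
  "ef_equiv V 0 t pe t' pe' = partial_iso V t pe t' pe'"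
| "ef_equiv V (Suc m) t pe t' pe' = (partial_iso V t pe t' pe' \<and> (\<forall>x\<in>V.
     (\<forall>w. t w \<noteq> None \<longrightarrow> (\<exists>w'. t' w' \<noteq> None \<and> ef_equiv V m t (pe(x:=Some w)) t' (pe'(x:=Some w')))) \<and>
     (\<forall>w'. t' w' \<noteq> None \<longrightarrow> (\<exists>w. t w \<noteq> None \<and> ef_equiv V m t (pe(x:=Some w)) t' (pe'(x:=Some w'))))))"

declare ef_equiv.simps(2)[simp del]

lemma ef_equiv_forth:
  assumes "ef_equiv V (Suc m) t pe t' pe'" "x \<in> V" "t w \<noteq> None"
  obtains w' where "t' w' \<noteq> None" "ef_equiv V m t (pe(x:=Some w)) t' (pe'(x:=Some w'))"
  using assms unfolding ef_equiv.simps(2) by blast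

lemma ef_equiv_back:
  assumes "ef_equiv V (Suc m) t pe t' pe'" "x \<in> V" "t' w' \<noteq> None"
  obtains w where "t w \<noteq> None" "ef_equiv V m t (pe(x:=Some w)) t' (pe'(x:=Some w'))"
  using assms unfolding ef_equiv.simps(2) by blast

lemma ef_equiv_partial_iso: "ef_equiv V m t pe t' pe' \<Longrightarrow> partial_iso V t pe t' pe'"
  by (cases m) (simp_all add: ef_equiv.simps(2))

lemma ef_equiv_SucI:
  assumes "partial_iso V t pe t' pe'"
    "\<And>x w. x \<in> V \<Longrightarrow> t w \<noteq> None \<Longrightarrow> \<exists>w'. t' w' \<noteq> None \<and> ef_equiv V m t (pe(x:=Some w)) t' (pe'(x:=Some w'))"
    "\<And>x w'. x \<in> V \<Longrightarrow> t' w' \<noteq> None \<Longrightarrow> \<exists>w. t w \<noteq> None \<and> ef_equiv V m t (pe(x:=Some w)) t' (pe'(x:=Some w'))"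
  shows "ef_equiv V (Suc m) t pe t' pe'"
  unfolding ef_equiv.simps(2) using assms by blast

lemma ef_equiv_Suc_imp: "ef_equiv V (Suc m) t pe t' pe' \<Longrightarrow> ef_equiv V m t pe t' pe'"
proof (induction m arbitrary: pe pe')
  case 0
  then show ?case using ef_equiv_partial_iso by simp
next
  case (Suc m)
  show ?case
  proof (rule ef_equiv_SucI)
    show "partial_iso V t pe t' pe'"
      using Suc.prems ef_equiv_partial_iso by blast
  qed (metis Suc.IH Suc.prems ef_equiv_forth ef_equiv_back)+
qed

lemma ef_equiv_le: "ef_equiv V m t pe t' pe' \<Longrightarrow> k \<le> m \<Longrightarrow> ef_equiv V k t pe t' pe'"
  by (induction m) (auto simp: le_Suc_eq dest: ef_equiv_Suc_imp)

lemma ef_equiv_refl: "ef_equiv V m t pe t pe"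
proof (induction m arbitrary: pe)
  case 0
  then show ?case by (simp add: partial_iso_def)
next
  case (Suc m)
  then show ?case by (intro ef_equiv_SucI) (auto simp: partial_iso_def)
qed

lemma partial_iso_sym:
  assumes "partial_iso V t pe t' pe'"
  shows "partial_iso V t' pe' t pe"
  unfolding partial_iso_def
proof (intro ballI conjI allI impI)
  fix x assume "x \<in> V"
  then show "pe' x = None \<longleftrightarrow> pe x = None"
    using assms unfolding partial_iso_def by simp
next
  fix x y a a' b b' i
  assume "x \<in> V" "y \<in> V" "pe' x = Some a" "pe x = Some a'" "pe' y = Some b" "pe y = Some b'"
  note iso = partial_isoD[OF assms \<open>x \<in> V\<close> \<open>y \<in> V\<close> this(4,6,3,5)]
  show "t' a = t a'" "a = [] \<longleftrightarrow> a' = []" "a = b \<longleftrightarrow> a' = b'" "prefix a b \<longleftrightarrow> prefix a' b'"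
    "b = a @ [i] \<longleftrightarrow> b' = a' @ [i]"
    using iso by simp_all
qed

lemma ef_equiv_sym: "ef_equiv V m t pe t' pe' \<Longrightarrow> ef_equiv V m t' pe' t pe"
proof (induction m arbitrary: pe pe')
  case 0
  then show ?case by (simp add: partial_iso_sym)
next
  case (Suc m)
  show ?case
  proof (rule ef_equiv_SucI)
    show "partial_iso V t' pe' t pe"
      using Suc.prems ef_equiv_partial_iso partial_iso_sym by blast
  qed (metis Suc.IH Suc.prems ef_equiv_forth ef_equiv_back)+
qed

lemma partial_iso_unpebble:
  assumes "partial_iso V t pe t' pe'"
  shows "partial_iso V t (pe(z:=None)) t' (pe'(z:=None))"
  unfolding partial_iso_def
proof (intro ballI conjI allI impI)
  fix x assume "x \<in> V"
  then show "(pe(z:=None)) x = None \<longleftrightarrow> (pe'(z:=None)) x = None"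
    using assms unfolding partial_iso_def by simp
next
  fix x y a a' b b' i
  assume "x \<in> V" "y \<in> V" "(pe(z:=None)) x = Some a" "(pe'(z:=None)) x = Some a'"
    "(pe(z:=None)) y = Some b" "(pe'(z:=None)) y = Some b'"
  then have "pe x = Some a" "pe' x = Some a'" "pe y = Some b" "pe' y = Some b'"
    by (auto split: if_splits)
  note iso = partial_isoD[OF assms \<open>x \<in> V\<close> \<open>y \<in> V\<close> this(1,3,2,4)]
  show "t a = t' a'" "a = [] \<longleftrightarrow> a' = []" "a = b \<longleftrightarrow> a' = b'" "prefix a b \<longleftrightarrow> prefix a' b'"
    "b = a @ [i] \<longleftrightarrow> b' = a' @ [i]"
    using iso by simp_all
qed

lemma ef_equiv_unpebble:
  "ef_equiv V m t pe t' pe' \<Longrightarrow> ef_equiv V m t (pe(z:=None)) t' (pe'(z:=None))"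
proof (induction m arbitrary: pe pe')
  case 0
  then show ?case by (simp only: ef_equiv.simps(1) partial_iso_unpebble)
next
  case (Suc m)
  have replace: "ef_equiv V m t (pe(z:=None, x:=Some w)) t' (pe'(z:=None, x:=Some w'))"
    if "ef_equiv V m t (pe(x:=Some w)) t' (pe'(x:=Some w'))" for x w w'
  proof (cases "x = z")
    case True
    then show ?thesis using that by simp
  next
    case False
    then have "pe(x:=Some w, z:=None) = pe(z:=None, x:=Some w)"
      "pe'(x:=Some w', z:=None) = pe'(z:=None, x:=Some w')"
      by (simp_all add: fun_upd_twist)
    with Suc.IH[OF that] show ?thesis by (simp only:)
  qed
  show ?case
  proof (rule ef_equiv_SucI)
    show "partial_iso V t (pe(z:=None)) t' (pe'(z:=None))"
      using Suc.prems ef_equiv_partial_iso partial_iso_unpebble by blast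
  next
    fix x w assume "x \<in> V" "t w \<noteq> None"
    then show "\<exists>w'. t' w' \<noteq> None \<and> ef_equiv V m t (pe(z:=None, x:=Some w)) t' (pe'(z:=None, x:=Some w'))"
    proof -
      obtain w' where "t' w' \<noteq> None" "ef_equiv V m t (pe(x:=Some w)) t' (pe'(x:=Some w'))"
        using ef_equiv_forth[OF Suc.prems \<open>x \<in> V\<close> \<open>t w \<noteq> None\<close>] .
      then show ?thesis using replace by blast
    qed
  next
    fix x w' assume "x \<in> V" "t' w' \<noteq> None"
    then show "\<exists>w. t w \<noteq> None \<and> ef_equiv V m t (pe(z:=None, x:=Some w)) t' (pe'(z:=None, x:=Some w'))"
    proof -
      obtain w where "t w \<noteq> None" "ef_equiv V m t (pe(x:=Some w)) t' (pe'(x:=Some w'))"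
        using ef_equiv_back[OF Suc.prems \<open>x \<in> V\<close> \<open>t' w' \<noteq> None\<close>] .
      then show ?thesis using replace by blast
    qed
  qed
qed

section \<open>Game equivalence implies elementary equivalence\<close>

fun qrank :: "'a fo \<Rightarrow> nat" where
  "qrank (Negf \<phi>) = qrank \<phi>"
| "qrank (Conjf \<phi> \<psi>) = max (qrank \<phi>) (qrank \<psi>)"
| "qrank (Exf x \<phi>) = Suc (qrank \<phi>)"
| "qrank _ = 0"

fun bvars :: "'a fo \<Rightarrow> nat set" where
  "bvars (Negf \<phi>) = bvars \<phi>"
| "bvars (Conjf \<phi> \<psi>) = bvars \<phi> \<union> bvars \<psi>"
| "bvars (Exf x \<phi>) = insert x (bvars \<phi>)"
| "bvars _ = {}"

lemma finite_bvars: "finite (bvars \<phi>)"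
  by (induction \<phi>) auto

definition agrees :: "(nat \<Rightarrow> nat list) \<Rightarrow> pebbles \<Rightarrow> bool" where
  "agrees e pe \<longleftrightarrow> (\<forall>x a. pe x = Some a \<longrightarrow> e x = a)"

lemma agrees_fun_upd: "agrees e pe \<Longrightarrow> agrees (e(x:=w)) (pe(x:=Some w))"
  unfolding agrees_def by auto

lemma agrees_unpebbled: "agrees e (\<lambda>_. None)"
  unfolding agrees_def by simp

lemma ef_equiv_holds_iff:
  assumes "ef_equiv V m t pe t' pe'" "qrank \<phi> \<le> m" "bvars \<phi> \<subseteq> V"
    "fv \<phi> \<subseteq> {x\<in>V. pe x \<noteq> None}" "agrees e pe" "agrees e' pe'"
  shows "holds t e \<phi> \<longleftrightarrow> holds t' e' \<phi>"
  using assms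
proof (induction \<phi> arbitrary: m pe pe' e e')
  case (Exf x \<phi>)
  then obtain m' where m: "m = Suc m'" by (cases m) auto
  have xV: "x \<in> V" using Exf.prems by auto
  have IH: "holds t (e(x:=w)) \<phi> \<longleftrightarrow> holds t' (e'(x:=w')) \<phi>"
    if "ef_equiv V m' t (pe(x:=Some w)) t' (pe'(x:=Some w'))" for w w'
  proof (rule Exf.IH[OF that])
    show "qrank \<phi> \<le> m'" "bvars \<phi> \<subseteq> V" "fv \<phi> \<subseteq> {y\<in>V. (pe(x:=Some w)) y \<noteq> None}"
      using Exf.prems m xV by auto
    show "agrees (e(x:=w)) (pe(x:=Some w))" "agrees (e'(x:=w')) (pe'(x:=Some w'))"
      using Exf.prems agrees_fun_upd by blast+
  qed
  show ?case
  proof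
    assume "holds t e (Exf x \<phi>)"
    then obtain w where w: "t w \<noteq> None" "holds t (e(x:=w)) \<phi>" by auto
    obtain w' where "t' w' \<noteq> None" "ef_equiv V m' t (pe(x:=Some w)) t' (pe'(x:=Some w'))"
      using ef_equiv_forth[OF Exf.prems(1)[unfolded m] xV w(1)] .
    then show "holds t' e' (Exf x \<phi>)"
      using IH w(2) by auto
  next
    assume "holds t' e' (Exf x \<phi>)"
    then obtain w' where w': "t' w' \<noteq> None" "holds t' (e'(x:=w')) \<phi>" by auto
    obtain w where "t w \<noteq> None" "ef_equiv V m' t (pe(x:=Some w)) t' (pe'(x:=Some w'))"
      using ef_equiv_back[OF Exf.prems(1)[unfolded m] xV w'(1)] .
    then show "holds t e (Exf x \<phi>)"
      using IH w'(2) by auto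
  qed
next
  case (Negf \<phi>)
  have "holds t e \<phi> \<longleftrightarrow> holds t' e' \<phi>"
    by (rule Negf.IH) (use Negf.prems in simp_all)
  then show ?case by simp
next
  case (Conjf \<phi> \<psi>)
  have "holds t e \<phi> \<longleftrightarrow> holds t' e' \<phi>"
    by (rule Conjf.IH(1)) (use Conjf.prems in auto)
  moreover have "holds t e \<psi> \<longleftrightarrow> holds t' e' \<psi>"
    by (rule Conjf.IH(2)) (use Conjf.prems in auto)
  ultimately show ?case by simp
next
  case (Eqf x y)
  show ?case
    by (rule partial_iso_pebbled_pair[OF ef_equiv_partial_iso[OF Eqf.prems(1)], of x y])
      (use Eqf.prems in \<open>auto simp: agrees_def\<close>)
next
  case (Lef x y)
  show ?case
    by (rule partial_iso_pebbled_pair[OF ef_equiv_partial_iso[OF Lef.prems(1)], of x y])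
      (use Lef.prems in \<open>auto simp: agrees_def\<close>)
next
  case (Succf i x y)
  show ?case
    by (rule partial_iso_pebbled_pair[OF ef_equiv_partial_iso[OF Succf.prems(1)], of x y])
      (use Succf.prems in \<open>auto simp: agrees_def\<close>)
next
  case (Labf c x)
  show ?case
    by (rule partial_iso_pebbled_pair[OF ef_equiv_partial_iso[OF Labf.prems(1)], of x x])
      (use Labf.prems in \<open>auto simp: agrees_def\<close>)
next
  case (VarPf i x)
  show ?case
    by (rule partial_iso_pebbled_pair[OF ef_equiv_partial_iso[OF VarPf.prems(1)], of x x])
      (use VarPf.prems in \<open>auto simp: agrees_def\<close>)
next
  case (Rootf x)
  show ?case
    by (rule partial_iso_pebbled_pair[OF ef_equiv_partial_iso[OF Rootf.prems(1)], of x x])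
      (use Rootf.prems in \<open>auto simp: agrees_def\<close>)
qed

lemma ef_equiv_models_iff:
  assumes "ef_equiv V m t (\<lambda>_. None) t' (\<lambda>_. None)" "qrank \<phi> \<le> m" "bvars \<phi> \<subseteq> V" "fv \<phi> = {}"
  shows "models t \<phi> \<longleftrightarrow> models t' \<phi>"
  unfolding models_def by (rule ef_equiv_holds_iff[OF assms(1-3)]) (use assms(4) agrees_unpebbled in auto)

section \<open>Hintikka formulas\<close>

definition list_of :: "'a set \<Rightarrow> 'a list" where
  "list_of A = (SOME xs. set xs = A)"

lemma set_list_of: "finite A \<Longrightarrow> set (list_of A) = A"
  unfolding list_of_def by (metis (mono_tags, lifting) finite_list someI_ex)

fun conj_list :: "'a fo list \<Rightarrow> 'a fo \<Rightarrow> 'a fo" where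
  "conj_list [] \<phi> = \<phi>"
| "conj_list (\<psi>#\<psi>s) \<phi> = Conjf \<psi> (conj_list \<psi>s \<phi>)"

lemma holds_conj_list: "holds t e (conj_list \<psi>s \<phi>) \<longleftrightarrow> (\<forall>\<psi>\<in>set \<psi>s. holds t e \<psi>) \<and> holds t e \<phi>"
  by (induction \<psi>s) auto

lemma qrank_conj_list_le: "qrank (conj_list \<psi>s \<phi>) \<le> m \<longleftrightarrow> (\<forall>\<psi>\<in>set \<psi>s. qrank \<psi> \<le> m) \<and> qrank \<phi> \<le> m"
  by (induction \<psi>s) auto

lemma bvars_conj_list: "bvars (conj_list \<psi>s \<phi>) = \<Union>(bvars ` set \<psi>s) \<union> bvars \<phi>"
  by (induction \<psi>s) auto

lemma fv_conj_list: "fv (conj_list \<psi>s \<phi>) = \<Union>(fv ` set \<psi>s) \<union> fv \<phi>"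
  by (induction \<psi>s) auto

lemma syms_conj_list: "syms (conj_list \<psi>s \<phi>) = \<Union>(syms ` set \<psi>s) \<union> syms \<phi>"
  by (induction \<psi>s) auto

lemma qvars_conj_list: "qvars (conj_list \<psi>s \<phi>) = \<Union>(qvars ` set \<psi>s) \<union> qvars \<phi>"
  by (induction \<psi>s) auto

lemmas conj_list_simps = qrank_conj_list_le bvars_conj_list fv_conj_list syms_conj_list qvars_conj_list

lemma wf_tree_parent:
  assumes "wf_tree lin A n t" "t (w @ [i]) \<noteq> None"
  shows "\<exists>a. t w = Some (Sym a) \<and> a \<in> A \<and> i < snd a"
proof -
  obtain l where l: "t w = Some l"
    using assms unfolding wf_tree_def by blast
  show ?thesis
  proof (cases l)
    case (Sym a)
    then show ?thesis using assms l unfolding wf_tree_def by blast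
  next
    case (Var j)
    then have "t (w @ [i]) = None"
      using assms(1) l unfolding wf_tree_def by blast
    with assms(2) show ?thesis by simp
  qed
qed

lemma wf_tree_label:
  assumes "wf_tree lin A n t" "t w = Some l"
  shows "(\<exists>a. l = Sym a \<and> a \<in> A) \<or> (\<exists>j. l = Var j \<and> j < n)"
  using assms unfolding wf_tree_def by (cases l) auto

locale hintikka =
  fixes lin :: bool and Sig :: "('c \<times> nat) set" and n :: nat and V :: "nat set"
  assumes finite_Sig: "finite Sig" and finite_V: "finite V" and V_nonempty: "V \<noteq> {}"
begin

definition arity_bound :: nat where
  "arity_bound = Suc (Max (insert 0 (snd ` Sig)))"

lemma child_index_less_arity_bound:
  assumes "wf_tree lin Sig n t" "t (a @ [i]) \<noteq> None"
  shows "i < arity_bound"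
proof -
  obtain c where c: "c \<in> Sig" "i < snd c"
    using wf_tree_parent[OF assms] by metis
  have "snd c \<le> Max (insert 0 (snd ` Sig))"
    using c finite_Sig by (intro Max_ge) auto
  then show ?thesis using c unfolding arity_bound_def by simp
qed

definition config :: "nat set \<Rightarrow> ('c \<times> nat) tree \<Rightarrow> pebbles \<Rightarrow> bool" where
  "config P t pe \<longleftrightarrow> wf_tree lin Sig n t \<and> (\<forall>x\<in>V. pe x \<noteq> None \<longleftrightarrow> x \<in> P) \<and>
     (\<forall>x a. x \<in> V \<longrightarrow> pe x = Some a \<longrightarrow> t a \<noteq> None)"

lemma config_fun_upd:
  "config P t pe \<Longrightarrow> x \<in> V \<Longrightarrow> t w \<noteq> None \<Longrightarrow> config (insert x P) t (pe(x:=Some w))"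
  unfolding config_def by auto

text \<open>Successor atoms with an index beyond \<open>arity_bound\<close> are false in every tree over Sig,
  so finitely many atoms suffice.\<close>

definition atoms :: "nat set \<Rightarrow> ('c \<times> nat) fo set" where
  "atoms P = (\<lambda>(x,y). Eqf x y) ` (P \<times> P) \<union> (\<lambda>(x,y). Lef x y) ` (P \<times> P) \<union>
     (\<lambda>(i,x,y). Succf i x y) ` ({..<arity_bound} \<times> P \<times> P) \<union> (\<lambda>(c,x). Labf c x) ` (Sig \<times> P) \<union>
     (\<lambda>(i,x). VarPf i x) ` ({..<n} \<times> P) \<union> Rootf ` P"

lemma finite_atoms: "finite P \<Longrightarrow> finite (atoms P)"
  unfolding atoms_def using finite_Sig by auto

definition in_fragment :: "nat \<Rightarrow> nat set \<Rightarrow> ('c \<times> nat) fo \<Rightarrow> bool" where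
  "in_fragment m P \<phi> \<longleftrightarrow>
     qrank \<phi> \<le> m \<and> bvars \<phi> \<subseteq> V \<and> fv \<phi> \<subseteq> P \<and> syms \<phi> \<subseteq> Sig \<and> (\<forall>i\<in>qvars \<phi>. i < n)"

lemma in_fragment_atoms: "\<phi> \<in> atoms P \<Longrightarrow> in_fragment 0 P \<phi>"
  unfolding atoms_def in_fragment_def by auto

lemma partial_iso_if_same_atoms:
  assumes cfg: "config P t pe" "config P t' pe'" "agrees e pe" "agrees e' pe'" "P \<subseteq> V"
    and same: "\<And>\<phi>. \<phi> \<in> atoms P \<Longrightarrow> holds t e \<phi> \<longleftrightarrow> holds t' e' \<phi>"
  shows "partial_iso V t pe t' pe'"
  unfolding partial_iso_def
proof (intro ballI conjI allI impI)
  fix x assume "x \<in> V"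
  then show "pe x = None \<longleftrightarrow> pe' x = None"
    using cfg(1,2) unfolding config_def by blast
next
  fix x y a a' b b' i assume xy: "x \<in> V" "y \<in> V" and
    pebbled: "pe x = Some a" "pe' x = Some a'" "pe y = Some b" "pe' y = Some b'"
  have P: "x \<in> P" "y \<in> P"
    using xy pebbled cfg(1) unfolding config_def by auto
  have e: "e x = a" "e y = b" "e' x = a'" "e' y = b'"
    using pebbled cfg(3,4) unfolding agrees_def by auto
  have wf: "wf_tree lin Sig n t" "wf_tree lin Sig n t'"
    using cfg unfolding config_def by auto
  have dom: "t a \<noteq> None" "t b \<noteq> None" "t' a' \<noteq> None" "t' b' \<noteq> None"
    using cfg(1,2) xy pebbled unfolding config_def by auto
  have atom: "holds t e \<phi> \<longleftrightarrow> holds t' e' \<phi>" if "\<phi> \<in> atoms P" for \<phi>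
    using same that .
  show "t a = t' a'"
  proof -
    obtain l where l: "t a = Some l" using dom by auto
    from wf_tree_label[OF wf(1) l] show ?thesis
    proof
      assume "\<exists>c. l = Sym c \<and> c \<in> Sig"
      then obtain c where c: "l = Sym c" "c \<in> Sig" by blast
      then have "Labf c x \<in> atoms P"
        using P unfolding atoms_def by blast
      from atom[OF this] show ?thesis using l e c by simp
    next
      assume "\<exists>j. l = Var j \<and> j < n"
      then obtain j where j: "l = Var j" "j < n" by blast
      then have "VarPf j x \<in> atoms P"
        using P unfolding atoms_def by blast
      from atom[OF this] show ?thesis using l e j by simp
    qed
  qed
  have "Rootf x \<in> atoms P"
    using P unfolding atoms_def by blast
  from atom[OF this] show "a = [] \<longleftrightarrow> a' = []"
    using e by simp
  have "Eqf x y \<in> atoms P"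
    using P unfolding atoms_def by blast
  from atom[OF this] show "a = b \<longleftrightarrow> a' = b'"
    using e by simp
  have "Lef x y \<in> atoms P"
    using P unfolding atoms_def by blast
  from atom[OF this] show "prefix a b \<longleftrightarrow> prefix a' b'"
    using e by simp
  show "b = a @ [i] \<longleftrightarrow> b' = a' @ [i]"
  proof (cases "i < arity_bound")
    case True
    then have "Succf i x y \<in> atoms P"
      using P unfolding atoms_def by (intro UnI1 UnI2 rev_image_eqI[of "(i, x, y)"]) auto
    from atom[OF this] show ?thesis using e by simp
  next
    case False
    then show ?thesis
      using child_index_less_arity_bound[OF wf(1), of a i] child_index_less_arity_bound[OF wf(2), of a' i]
        dom by auto
  qed
qed

definition atom_type :: "nat set \<Rightarrow> ('c \<times> nat) fo set \<Rightarrow> ('c \<times> nat) fo list" where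
  "atom_type P S = map (\<lambda>\<phi>. if \<phi> \<in> S then \<phi> else Negf \<phi>) (list_of (atoms P))"

lemma holds_atom_type:
  assumes "finite P"
  shows "(\<forall>\<psi>\<in>set (atom_type P S). holds t e \<psi>) \<longleftrightarrow> (\<forall>\<phi>\<in>atoms P. holds t e \<phi> \<longleftrightarrow> \<phi> \<in> S)"
proof -
  have "(\<forall>\<psi>\<in>set (atom_type P S). holds t e \<psi>) \<longleftrightarrow>
      (\<forall>\<phi>\<in>atoms P. holds t e (if \<phi> \<in> S then \<phi> else Negf \<phi>))"
    unfolding atom_type_def set_map set_list_of[OF finite_atoms[OF assms]] by blast
  also have "\<dots> \<longleftrightarrow> (\<forall>\<phi>\<in>atoms P. holds t e \<phi> \<longleftrightarrow> \<phi> \<in> S)"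
    by (intro ball_cong) auto
  finally show ?thesis .
qed

lemma in_fragment_atom_type:
  assumes "finite P" "\<psi> \<in> set (atom_type P S)"
  shows "in_fragment 0 P \<psi>"
proof -
  obtain \<phi> where "\<phi> \<in> atoms P" "\<psi> = (if \<phi> \<in> S then \<phi> else Negf \<phi>)"
    using assms(2) unfolding atom_type_def set_map set_list_of[OF finite_atoms[OF assms(1)]] by auto
  then show ?thesis
    using in_fragment_atoms unfolding in_fragment_def by auto
qed

definition true_fo :: "('c \<times> nat) fo" where
  "true_fo = (let v = SOME v. v \<in> V in Negf (Exf v (Negf (Eqf v v))))"

lemma holds_true_fo: "holds t e true_fo"
  unfolding true_fo_def by (simp add: Let_def)

lemma in_fragment_true_fo: "in_fragment (Suc m) P true_fo"
  unfolding true_fo_def in_fragment_def Let_def using V_nonempty by (simp add: some_in_eq)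

definition placements_match :: "('c \<times> nat) tree \<Rightarrow> (nat \<Rightarrow> nat list) \<Rightarrow> nat \<Rightarrow> ('c \<times> nat) fo set \<Rightarrow> bool" where
  "placements_match t e x G \<longleftrightarrow>
     (\<forall>\<psi>\<in>G. \<exists>w. t w \<noteq> None \<and> holds t (e(x:=w)) \<psi>) \<and> (\<forall>w. t w \<noteq> None \<longrightarrow> (\<exists>\<psi>\<in>G. holds t (e(x:=w)) \<psi>))"

definition forth_back :: "nat \<Rightarrow> ('c \<times> nat) fo set \<Rightarrow> ('c \<times> nat) fo list" where
  "forth_back x G = map (Exf x) (list_of G) @ [Negf (Exf x (conj_list (map Negf (list_of G)) (Eqf x x)))]"

lemma holds_forth_back:
  assumes "finite G"
  shows "(\<forall>\<psi>\<in>set (forth_back x G). holds t e \<psi>) \<longleftrightarrow> placements_match t e x G"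
proof -
  have "holds t e (Negf (Exf x (conj_list (map Negf (list_of G)) (Eqf x x)))) \<longleftrightarrow>
      (\<forall>w. t w \<noteq> None \<longrightarrow> (\<exists>\<psi>\<in>G. holds t (e(x:=w)) \<psi>))"
    by (force simp: holds_conj_list set_list_of[OF assms])
  then show ?thesis
    unfolding forth_back_def placements_match_def by (auto simp: set_list_of[OF assms])
qed

lemma in_fragment_forth_back:
  assumes "finite G" "\<And>\<psi>. \<psi> \<in> G \<Longrightarrow> in_fragment m (insert x P) \<psi>" "x \<in> V" "\<psi> \<in> set (forth_back x G)"
  shows "in_fragment (Suc m) P \<psi>"
proof -
  have G: "\<forall>\<phi>\<in>G. qrank \<phi> \<le> m \<and> bvars \<phi> \<subseteq> V \<and> fv \<phi> \<subseteq> insert x P \<and> syms \<phi> \<subseteq> Sig \<and>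
      (\<forall>i\<in>qvars \<phi>. i < n)"
    using assms(2) unfolding in_fragment_def by blast
  from assms(4) consider \<phi> where "\<phi> \<in> G" "\<psi> = Exf x \<phi>"
    | "\<psi> = Negf (Exf x (conj_list (map Negf (list_of G)) (Eqf x x)))"
    unfolding forth_back_def set_append set_map set_list_of[OF assms(1)] by auto
  then show ?thesis
  proof cases
    case 1
    then show ?thesis using G assms(3) unfolding in_fragment_def by auto
  next
    case 2
    then show ?thesis
      using G assms(3) unfolding in_fragment_def
      by (auto simp: conj_list_simps set_list_of[OF assms(1)])
  qed
qed

text \<open>A formula of rank m+1 fixes the atomic type of the pebbled vertices and, for each pebble x,
  which of the rank-m formulas describe the possible placements of x.\<close>

definition hintikka_formula ::
    "nat set \<Rightarrow> ('c \<times> nat) fo set \<Rightarrow> (nat \<Rightarrow> ('c \<times> nat) fo set) \<Rightarrow> ('c \<times> nat) fo" where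
  "hintikka_formula P S G =
     conj_list (atom_type P S @ concat (map (\<lambda>x. forth_back x (G x)) (list_of V))) true_fo"

lemma holds_hintikka_formula:
  assumes "finite P" "\<And>x. x \<in> V \<Longrightarrow> finite (G x)"
  shows "holds t e (hintikka_formula P S G) \<longleftrightarrow>
     (\<forall>\<phi>\<in>atoms P. holds t e \<phi> \<longleftrightarrow> \<phi> \<in> S) \<and> (\<forall>x\<in>V. placements_match t e x (G x))"
  using set_list_of[OF finite_V] assms
  unfolding hintikka_formula_def holds_conj_list set_append holds_atom_type[OF assms(1), symmetric]
  by (auto simp: holds_true_fo holds_forth_back[symmetric])

lemma in_fragment_hintikka_formula:
  assumes "finite P" "\<And>x. x \<in> V \<Longrightarrow> finite (G x)"
    "\<And>x \<psi>. x \<in> V \<Longrightarrow> \<psi> \<in> G x \<Longrightarrow> in_fragment m (insert x P) \<psi>"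
  shows "in_fragment (Suc m) P (hintikka_formula P S G)"
proof -
  have "in_fragment (Suc m) P \<psi>"
    if "\<psi> \<in> set (atom_type P S @ concat (map (\<lambda>x. forth_back x (G x)) (list_of V)))" for \<psi>
    using that set_list_of[OF finite_V] in_fragment_atom_type[OF assms(1)]
      in_fragment_forth_back[OF assms(2,3)]
    by (fastforce simp: in_fragment_def)
  then show ?thesis
    using in_fragment_true_fo unfolding hintikka_formula_def in_fragment_def conj_list_simps by blast
qed

definition hintikka_set :: "nat \<Rightarrow> nat set \<Rightarrow> ('c \<times> nat) fo set \<Rightarrow> bool" where
  "hintikka_set m P H \<longleftrightarrow> finite H \<and> (\<forall>\<chi>\<in>H. in_fragment m P \<chi>) \<and>
     (\<forall>t pe e. config P t pe \<and> agrees e pe \<longrightarrow> (\<exists>\<chi>\<in>H. holds t e \<chi>)) \<and>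
     (\<forall>\<chi>\<in>H. \<forall>t pe e t' pe' e'. config P t pe \<and> agrees e pe \<and> config P t' pe' \<and> agrees e' pe' \<and>
        holds t e \<chi> \<and> holds t' e' \<chi> \<longrightarrow> ef_equiv V m t pe t' pe')"

lemma hintikka_set_0:
  assumes "P \<subseteq> V" "p \<in> P"
  shows "hintikka_set 0 P ((\<lambda>S. conj_list (atom_type P S) (Eqf p p)) ` Pow (atoms P))"
proof -
  have finP: "finite P" using assms(1) finite_V finite_subset by blast
  have holds_iff: "holds t e (conj_list (atom_type P S) (Eqf p p)) \<longleftrightarrow> (\<forall>\<phi>\<in>atoms P. holds t e \<phi> \<longleftrightarrow> \<phi> \<in> S)"
    for t e S
    unfolding holds_conj_list holds_atom_type[OF finP] by simp
  show ?thesis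
    unfolding hintikka_set_def
  proof (intro conjI ballI allI impI)
    show "finite ((\<lambda>S. conj_list (atom_type P S) (Eqf p p)) ` Pow (atoms P))"
      using finite_atoms[OF finP] by simp
  next
    fix \<chi> assume "\<chi> \<in> (\<lambda>S. conj_list (atom_type P S) (Eqf p p)) ` Pow (atoms P)"
    then obtain S where \<chi>: "\<chi> = conj_list (atom_type P S) (Eqf p p)" by blast
    have "\<forall>\<psi>\<in>set (atom_type P S). in_fragment 0 P \<psi>"
      using in_fragment_atom_type[OF finP] by blast
    then show "in_fragment 0 P \<chi>"
      unfolding \<chi> in_fragment_def conj_list_simps using assms(2) by (auto simp: in_fragment_def)
  next
    fix t pe e
    show "\<exists>\<chi>\<in>(\<lambda>S. conj_list (atom_type P S) (Eqf p p)) ` Pow (atoms P). holds t e \<chi>"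
      using holds_iff[of t e "{\<phi>\<in>atoms P. holds t e \<phi>}"] by blast
  next
    fix \<chi> t pe e t' pe' e'
    assume "\<chi> \<in> (\<lambda>S. conj_list (atom_type P S) (Eqf p p)) ` Pow (atoms P)"
      and h: "config P t pe \<and> agrees e pe \<and> config P t' pe' \<and> agrees e' pe' \<and> holds t e \<chi> \<and> holds t' e' \<chi>"
    then obtain S where "\<chi> = conj_list (atom_type P S) (Eqf p p)" by auto
    then have "partial_iso V t pe t' pe'"
      using h holds_iff assms(1) by (intro partial_iso_if_same_atoms) auto
    then show "ef_equiv V 0 t pe t' pe'" by simp
  qed
qed

lemma placements_match_realised:
  assumes "config P t pe" "agrees e pe" "x \<in> V" and Hf: "hintikka_set m (insert x P) Hf"
  shows "placements_match t e x {\<psi>\<in>Hf. \<exists>w. t w \<noteq> None \<and> holds t (e(x:=w)) \<psi>}"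
  unfolding placements_match_def
proof (intro conjI ballI allI impI)
  fix w assume "t w \<noteq> None"
  then obtain \<chi> where "\<chi> \<in> Hf" "holds t (e(x:=w)) \<chi>"
    using Hf config_fun_upd[OF assms(1,3)] agrees_fun_upd[OF assms(2)] unfolding hintikka_set_def by blast
  with \<open>t w \<noteq> None\<close> show "\<exists>\<psi>\<in>{\<psi>\<in>Hf. \<exists>w. t w \<noteq> None \<and> holds t (e(x:=w)) \<psi>}. holds t (e(x:=w)) \<psi>"
    by blast
qed auto

lemma ef_equiv_if_hintikka_formula:
  assumes "P \<subseteq> V" and Hf: "\<And>x. x \<in> V \<Longrightarrow> hintikka_set m (insert x P) (Hf x)"
    and G: "\<And>x. x \<in> V \<Longrightarrow> G x \<subseteq> Hf x"
    and cfg: "config P t pe" "agrees e pe" "config P t' pe'" "agrees e' pe'"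
    and holds: "holds t e (hintikka_formula P S G)" "holds t' e' (hintikka_formula P S G)"
  shows "ef_equiv V (Suc m) t pe t' pe'"
proof -
  have finP: "finite P" using assms(1) finite_V finite_subset by blast
  have finG: "finite (G x)" if "x \<in> V" for x
    using Hf[OF that] G[OF that] unfolding hintikka_set_def by (blast intro: finite_subset)
  have types: "\<forall>\<phi>\<in>atoms P. holds t e \<phi> \<longleftrightarrow> \<phi> \<in> S" "\<forall>x\<in>V. placements_match t e x (G x)"
    "\<forall>\<phi>\<in>atoms P. holds t' e' \<phi> \<longleftrightarrow> \<phi> \<in> S" "\<forall>x\<in>V. placements_match t' e' x (G x)"
    using holds holds_hintikka_formula[OF finP finG] by simp_all
  have step: "ef_equiv V m t (pe(x:=Some w)) t' (pe'(x:=Some w'))"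
    if "x \<in> V" "t w \<noteq> None" "t' w' \<noteq> None" "\<psi> \<in> G x" "holds t (e(x:=w)) \<psi>" "holds t' (e'(x:=w')) \<psi>"
    for x w w' \<psi>
    using Hf[OF that(1)] G[OF that(1)] that
      config_fun_upd[OF cfg(1) that(1,2)] config_fun_upd[OF cfg(3) that(1,3)]
      agrees_fun_upd[OF cfg(2)] agrees_fun_upd[OF cfg(4)]
    unfolding hintikka_set_def by blast
  show ?thesis
  proof (rule ef_equiv_SucI)
    show "partial_iso V t pe t' pe'"
      using cfg types assms(1) by (intro partial_iso_if_same_atoms) auto
  next
    fix x w assume "x \<in> V" "t w \<noteq> None"
    then obtain \<psi> w' where "\<psi> \<in> G x" "holds t (e(x:=w)) \<psi>" "t' w' \<noteq> None" "holds t' (e'(x:=w')) \<psi>"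
      using types(2,4) unfolding placements_match_def by meson
    then show "\<exists>w'. t' w' \<noteq> None \<and> ef_equiv V m t (pe(x:=Some w)) t' (pe'(x:=Some w'))"
      using step \<open>x \<in> V\<close> \<open>t w \<noteq> None\<close> by blast
  next
    fix x w' assume "x \<in> V" "t' w' \<noteq> None"
    then obtain \<psi> w where "\<psi> \<in> G x" "holds t' (e'(x:=w')) \<psi>" "t w \<noteq> None" "holds t (e(x:=w)) \<psi>"
      using types(2,4) unfolding placements_match_def by meson
    then show "\<exists>w. t w \<noteq> None \<and> ef_equiv V m t (pe(x:=Some w)) t' (pe'(x:=Some w'))"
      using step \<open>x \<in> V\<close> \<open>t' w' \<noteq> None\<close> by blast
  qed
qed

lemma hintikka_set_Suc:
  assumes "P \<subseteq> V" and Hf: "\<And>x. x \<in> V \<Longrightarrow> hintikka_set m (insert x P) (Hf x)"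
  shows "hintikka_set (Suc m) P
    ((\<lambda>(S, G). hintikka_formula P S G) ` (Pow (atoms P) \<times> PiE V (\<lambda>x. Pow (Hf x))))"
    (is "hintikka_set _ _ ?H")
proof -
  have finP: "finite P" using assms(1) finite_V finite_subset by blast
  have finHf: "finite (Hf x)" if "x \<in> V" for x
    using Hf[OF that] unfolding hintikka_set_def by blast
  have finG: "finite (G x)" if "G \<in> PiE V (\<lambda>x. Pow (Hf x))" "x \<in> V" for G x
    using that finHf by (auto simp: PiE_def Pi_def intro: finite_subset)
  show ?thesis
    unfolding hintikka_set_def
  proof (intro conjI ballI allI impI)
    show "finite ?H"
      using finite_atoms[OF finP] finHf finite_V
      by (intro finite_imageI finite_cartesian_product finite_PiE) auto
  next
    fix \<chi> assume "\<chi> \<in> ?H"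
    then obtain S G where \<chi>: "\<chi> = hintikka_formula P S G" and G: "G \<in> PiE V (\<lambda>x. Pow (Hf x))"
      by auto
    have "in_fragment m (insert x P) \<psi>" if "x \<in> V" "\<psi> \<in> G x" for x \<psi>
      using Hf[OF that(1)] that G unfolding hintikka_set_def by (auto simp: PiE_def Pi_def)
    then show "in_fragment (Suc m) P \<chi>"
      unfolding \<chi> using finG[OF G] by (intro in_fragment_hintikka_formula[OF finP])
  next
    fix t pe e assume cfg: "config P t pe \<and> agrees e pe"
    define G where "G = (\<lambda>x\<in>V. {\<psi>\<in>Hf x. \<exists>w. t w \<noteq> None \<and> holds t (e(x:=w)) \<psi>})"
    have G: "G \<in> PiE V (\<lambda>x. Pow (Hf x))"
      unfolding G_def by auto
    have "placements_match t e x (G x)" if "x \<in> V" for x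
      using placements_match_realised[OF conjunct1[OF cfg] conjunct2[OF cfg] that Hf[OF that]] that
      unfolding G_def by simp
    then have "holds t e (hintikka_formula P {\<phi>\<in>atoms P. holds t e \<phi>} G)"
      using holds_hintikka_formula[OF finP finG[OF G]] by simp
    moreover have "hintikka_formula P {\<phi>\<in>atoms P. holds t e \<phi>} G \<in> ?H"
      using G by auto
    ultimately show "\<exists>\<chi>\<in>?H. holds t e \<chi>" by blast
  next
    fix \<chi> t pe e t' pe' e'
    assume "\<chi> \<in> ?H" and h: "config P t pe \<and> agrees e pe \<and> config P t' pe' \<and> agrees e' pe' \<and>
      holds t e \<chi> \<and> holds t' e' \<chi>"
    then obtain S G where "\<chi> = hintikka_formula P S G" "G \<in> PiE V (\<lambda>x. Pow (Hf x))"
      by auto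
    moreover from this(2) have "\<And>x. x \<in> V \<Longrightarrow> G x \<subseteq> Hf x"
      by (auto simp: PiE_def Pi_def)
    ultimately show "ef_equiv V (Suc m) t pe t' pe'"
      using ef_equiv_if_hintikka_formula[OF assms] h by blast
  qed
qed

lemma hintikka_set_exists:
  "P \<subseteq> V \<Longrightarrow> (m = 0 \<longrightarrow> P \<noteq> {}) \<Longrightarrow> \<exists>H. hintikka_set m P H"
proof (induction m arbitrary: P)
  case 0
  then show ?case using hintikka_set_0 by blast
next
  case (Suc m)
  then have "\<forall>x\<in>V. \<exists>H. hintikka_set m (insert x P) H" by auto
  then obtain Hf where "\<And>x. x \<in> V \<Longrightarrow> hintikka_set m (insert x P) (Hf x)"
    by metis
  then show ?case using hintikka_set_Suc[OF Suc.prems(1)] by blast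
qed

lemma hintikka_sentences:
  assumes "0 < m"
  obtains H where "finite H" "\<And>\<chi>. \<chi> \<in> H \<Longrightarrow> in_fragment m {} \<chi>"
    "\<And>t. wf_tree lin Sig n t \<Longrightarrow> \<exists>\<chi>\<in>H. models t \<chi>"
    "\<And>\<chi> t t'. \<chi> \<in> H \<Longrightarrow> wf_tree lin Sig n t \<Longrightarrow> wf_tree lin Sig n t' \<Longrightarrow>
        models t \<chi> \<Longrightarrow> models t' \<chi> \<Longrightarrow> ef_equiv V m t (\<lambda>_. None) t' (\<lambda>_. None)"
proof -
  obtain H where "hintikka_set m {} H"
    using hintikka_set_exists[of "{}" m] assms by auto
  moreover have "config {} t (\<lambda>_. None)" if "wf_tree lin Sig n t" for t
    using that unfolding config_def by simp
  ultimately show ?thesis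
    using that agrees_unpebbled unfolding hintikka_set_def models_def by metis
qed

end

section \<open>Vertices of a flattened tree of trees\<close>

type_synonym 'c ttree = "(('c \<times> nat) tree \<times> nat) tree"

definition tree_like :: "'a tree \<Rightarrow> bool" where
  "tree_like t \<longleftrightarrow>
    (\<forall>w i. t (w @ [i]) \<noteq> None \<longrightarrow> t w \<noteq> None) \<and> (\<forall>w j i. t w = Some (Var j) \<longrightarrow> t (w @ [i]) = None)"

lemma tree_like_append: "tree_like t \<Longrightarrow> t (p @ z) \<noteq> None \<Longrightarrow> t p \<noteq> None"
proof (induction z rule: rev_induct)
  case Nil then show ?case by simp
next
  case (snoc i z)
  then have "t ((p @ z) @ [i]) \<noteq> None" by simp
  then have "t (p @ z) \<noteq> None" using snoc.prems(1) unfolding tree_like_def by blast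
  then show ?case using snoc by blast
qed

lemma tree_like_var_leaf: 
  assumes "tree_like t" "t p = Some (Var j)" "prefix p q" "t q \<noteq> None" shows "p = q"
proof (rule ccontr)
  assume "p \<noteq> q"
  obtain z where q: "q = p @ z" using assms(3) by (auto elim: prefixE)
  with \<open>p \<noteq> q\<close> obtain i z' where z: "z = i # z'" by (cases z) auto
  have "t ((p @ [i]) @ z') \<noteq> None" using assms(4) q z by simp
  then have "t (p @ [i]) \<noteq> None" using tree_like_append[OF assms(1)] by blast
  moreover have "t (p @ [i]) = None" using assms(1,2) unfolding tree_like_def by blast
  ultimately show False by simp
qed

lemma wf_tree_tree_like: "wf_tree lin A n t \<Longrightarrow> tree_like t"
  unfolding wf_tree_def tree_like_def by blast

text \<open>A vertex of S labelled \<open>x\<^sub>j\<close> contributes the single leaf \<open>x\<^sub>j\<close> to \<open>flat S\<close>, so its component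
  is the one-vertex tree \<open>x\<^sub>j\<close>.\<close>

definition component :: "'c ttree \<Rightarrow> nat list \<Rightarrow> ('c \<times> nat) tree" where
  "component S u = (case S u of Some (Sym (T, k)) \<Rightarrow> T
     | Some (Var j) \<Rightarrow> (\<lambda>w. if w = [] then Some (Var j) else None) | None \<Rightarrow> (\<lambda>_. None))"

definition sym_vertex :: "'c ttree \<Rightarrow> nat list \<Rightarrow> bool" where
  "sym_vertex S u \<longleftrightarrow> (\<exists>a. S u = Some (Sym a))"

definition proper_ttree :: "'c ttree \<Rightarrow> bool" where
  "proper_ttree S \<longleftrightarrow>
    (\<forall>u. tree_like (component S u) \<and> (sym_vertex S u \<longrightarrow> (\<exists>c. component S u [] = Some (Sym c))))"

lemma component_Sym: "S u = Some (Sym (T, k)) \<Longrightarrow> component S u = T"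
  unfolding component_def by simp

lemma component_Var: "S u = Some (Var j) \<Longrightarrow> component S u = (\<lambda>w. if w = [] then Some (Var j) else None)"
  unfolding component_def by simp

lemma component_None: "S u = None \<Longrightarrow> component S u = (\<lambda>_. None)"
  unfolding component_def by simp

lemma wf_tree_trees_sorted_Sym:
  assumes "wf_tree lin (trees_sorted lin Sig) n S" "S u = Some (Sym (s, k))"
  shows "wf_tree lin Sig k s"
proof -
  have "(s, k) \<in> trees_sorted lin Sig"
    using assms unfolding wf_tree_def by blast
  then show ?thesis unfolding trees_sorted_def by simp
qed

lemma wf_tree_proper_ttree:
  assumes "wf_tree lin (trees_sorted lin Sig) n S"
  shows "proper_ttree S"
  unfolding proper_ttree_def
proof (intro allI conjI impI)
  fix u
  show "tree_like (component S u)"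
  proof (cases "S u")
    case None
    then show ?thesis by (simp add: component_None tree_like_def)
  next
    case (Some l)
    then show ?thesis
    proof (cases l)
      case (Sym a)
      with Some obtain s k where "S u = Some (Sym (s, k))" by (cases a) auto
      then show ?thesis
        using wf_tree_tree_like[OF wf_tree_trees_sorted_Sym[OF assms]] component_Sym[of S u s k] by metis
    next
      case (Var j)
      then show ?thesis using Some by (simp add: component_Var tree_like_def)
    qed
  qed
next
  fix u assume "sym_vertex S u"
  then obtain s k where Su: "S u = Some (Sym (s, k))" unfolding sym_vertex_def by auto
  then have "wf_tree lin Sig k s" by (rule wf_tree_trees_sorted_Sym[OF assms])
  then show "\<exists>c. component S u [] = Some (Sym c)"
    using component_Sym[of S u s k, OF Su] unfolding wf_tree_def by auto
qed

text \<open>\<open>decomp S u a\<close>: the list of segments a describes a vertex of the unravelled tree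
  read from the vertex u of S.\<close>

fun decomp :: "'c ttree \<Rightarrow> nat list \<Rightarrow> nat list list \<Rightarrow> bool" where
  "decomp S u [] = False"
| "decomp S u [p] =
    (component S u p \<noteq> None \<and> (sym_vertex S u \<longrightarrow> (\<exists>c. component S u p = Some (Sym c))))"
| "decomp S u (p # q # r) =
    (sym_vertex S u \<and> (\<exists>i. component S u p = Some (Var i) \<and> decomp S (u @ [i]) (q # r)))"

fun var_index :: "'a lab option \<Rightarrow> nat" where
  "var_index (Some (Var i)) = i"
| "var_index _ = 0"

fun decomp_vertex :: "'c ttree \<Rightarrow> nat list \<Rightarrow> nat list list \<Rightarrow> nat \<Rightarrow> nat list" where
  "decomp_vertex S u a 0 = u"
| "decomp_vertex S u [] (Suc j) = u"
| "decomp_vertex S u (p # r) (Suc j) = decomp_vertex S (u @ [var_index (component S u p)]) r j"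

definition decomp_label :: "'c ttree \<Rightarrow> nat list \<Rightarrow> nat list list \<Rightarrow> ('c \<times> nat) lab option" where
  "decomp_label S u a = component S (decomp_vertex S u a (length a - 1)) (last a)"

lemma decomp_vertex_take: "take j a = take j b \<Longrightarrow> decomp_vertex S u a j = decomp_vertex S u b j"
proof (induction j arbitrary: u a b)
  case 0 then show ?case by simp
next
  case (Suc j)
  show ?case
  proof (cases a)
    case Nil
    then have "take (Suc j) b = []" using Suc.prems by simp
    then have "b = []" by simp
    then show ?thesis using Nil by simp
  next
    case (Cons p r)
    have "take (Suc j) b = p # take j r" using Suc.prems Cons by simp
    then have "b \<noteq> []" by (metis list.simps(3) take_Nil)
    then obtain p' r' where b: "b = p' # r'" by (meson neq_Nil_conv)
    then have "p = p'" "take j r = take j r'" using Suc.prems Cons by simp_all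
    have "decomp_vertex S (u @ [var_index (component S u p)]) r j =
        decomp_vertex S (u @ [var_index (component S u p)]) r' j"
      by (rule Suc.IH) fact
    then show ?thesis using Cons b \<open>p = p'\<close> by simp
  qed
qed

lemma decomp_vertex_Suc:
  "j < length a \<Longrightarrow>
    decomp_vertex S u a (Suc j) =
      decomp_vertex S u a j @ [var_index (component S (decomp_vertex S u a j) (a ! j))]"
proof (induction j arbitrary: u a)
  case 0 then show ?case by (cases a) auto
next
  case (Suc j)
  then obtain p r where "a = p # r" by (cases a) auto
  then show ?case using Suc by simp
qed

lemma decomp_vertex_snoc:
  "decomp_vertex S u (b @ [p]) (Suc (length b)) =
    decomp_vertex S u b (length b) @ [var_index (component S (decomp_vertex S u b (length b)) p)]"
proof -
  have "decomp_vertex S u (b @ [p]) (Suc (length b)) = decomp_vertex S u (b @ [p]) (length b) @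
      [var_index (component S (decomp_vertex S u (b @ [p]) (length b)) ((b @ [p]) ! length b))]"
    by (rule decomp_vertex_Suc) simp
  moreover have "decomp_vertex S u (b @ [p]) (length b) = decomp_vertex S u b (length b)"
    by (rule decomp_vertex_take) simp
  ultimately show ?thesis by simp
qed

definition decomp_step :: "'c ttree \<Rightarrow> nat list \<Rightarrow> nat list list \<Rightarrow> nat \<Rightarrow> bool" where
  "decomp_step S u a j \<longleftrightarrow> (let v = decomp_vertex S u a j in
     (Suc j < length a \<longrightarrow> sym_vertex S v \<and> (\<exists>i. component S v (a ! j) = Some (Var i))) \<and>
     (Suc j = length a \<longrightarrow>
        component S v (a ! j) \<noteq> None \<and> (sym_vertex S v \<longrightarrow> (\<exists>c. component S v (a ! j) = Some (Sym c)))))"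

lemma decomp_iff: "decomp S u a \<longleftrightarrow> a \<noteq> [] \<and> (\<forall>j<length a. decomp_step S u a j)"
proof (induction S u a rule: decomp.induct)
  case (1 S u) then show ?case by simp
next
  case (2 S u p) then show ?case by (simp add: decomp_step_def)
next
  case (3 S u p q r)
  show ?case
  proof
    assume v: "decomp S u (p # q # r)"
    then obtain i where i: "sym_vertex S u" "component S u p = Some (Var i)" "decomp S (u @ [i]) (q # r)"
      by auto
    have IH: "\<forall>j<length (q # r). decomp_step S (u @ [i]) (q # r) j" using 3 i by auto
    show "p # q # r \<noteq> [] \<and> (\<forall>j<length (p # q # r). decomp_step S u (p # q # r) j)"
    proof (intro conjI allI impI)
      fix j assume j: "j < length (p # q # r)"
      show "decomp_step S u (p # q # r) j"
      proof (cases j)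
        case 0 then show ?thesis using i by (simp add: decomp_step_def)
      next
        case (Suc j')
        then have "decomp_step S (u @ [i]) (q # r) j'" using IH j by simp
        then show ?thesis using Suc i by (simp add: decomp_step_def)
      qed
    qed simp
  next
    assume h: "p # q # r \<noteq> [] \<and> (\<forall>j<length (p # q # r). decomp_step S u (p # q # r) j)"
    have "decomp_step S u (p # q # r) 0" using h by auto
    then obtain i where i: "sym_vertex S u" "component S u p = Some (Var i)" by (auto simp: decomp_step_def)
    have "\<forall>j<length (q # r). decomp_step S (u @ [i]) (q # r) j"
    proof (intro allI impI)
      fix j assume "j < length (q # r)"
      then have "decomp_step S u (p # q # r) (Suc j)" using h by auto
      then show "decomp_step S (u @ [i]) (q # r) j" using i by (simp add: decomp_step_def)
    qed
    then have "decomp S (u @ [i]) (q # r)" using 3 i by auto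
    then show "decomp S u (p # q # r)" using i by auto
  qed
qed

lemma decomp_stepD: "decomp S u a \<Longrightarrow> j < length a \<Longrightarrow> decomp_step S u a j"
  using decomp_iff by blast

lemma decomp_not_Nil: "decomp S u a \<Longrightarrow> a \<noteq> []"
  using decomp_iff by blast

lemma decomp_inner_segment_not_Nil:
  assumes "proper_ttree S" "decomp S u a" "Suc j < length a" shows "a ! j \<noteq> []"
proof
  assume h: "a ! j = []"
  have "decomp_step S u a j" using decomp_stepD[OF assms(2)] assms(3) by simp
  then obtain i where "sym_vertex S (decomp_vertex S u a j)"
      "component S (decomp_vertex S u a j) (a ! j) = Some (Var i)"
    using assms(3) unfolding decomp_step_def Let_def by auto
  then show False using assms(1) h unfolding proper_ttree_def by force
qed

lemma concat_take_nth:
  assumes "k < length b"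
  shows "concat b = concat (take k b) @ b ! k @ concat (drop (Suc k) b)"
proof -
  have "b = take k b @ [b ! k] @ drop (Suc k) b" using assms by (simp add: id_take_nth_drop)
  then show ?thesis by (metis concat.simps(2) concat_append append_Nil2 concat.simps(1) append.assoc)
qed

lemma concat_last:
  assumes "a \<noteq> []"
  shows "concat a = concat (take (length a - 1) a) @ a ! (length a - 1)"
  using concat_take_nth[of "length a - 1" a] assms by simp

lemma find_var_prefix:
  assumes "tree_like T" "T p = Some (Var i)" "p \<noteq> []"
  shows "find (\<lambda>l. is_var (T (take l (p @ z)))) [1..<Suc (length (p @ z))] = Some (length p)"
  unfolding find_Some_iff
proof (intro exI[of _ "length p - 1"] conjI allI impI)
  have "0 < length p"
    using assms(3) by simp
  then have e: "[1..<Suc (length (p @ z))] ! (length p - 1) = length p"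
    by (subst nth_upt) auto
  show "length p - 1 < length [1..<Suc (length (p @ z))]"
    using \<open>0 < length p\<close> by (simp only: length_upt length_append)
  show "is_var (T (take ([1..<Suc (length (p @ z))] ! (length p - 1)) (p @ z)))"
    unfolding e using assms(2) by (simp add: is_var_def)
  show "length p = [1..<Suc (length (p @ z))] ! (length p - 1)"
    using e by simp
next
  fix j assume j: "j < length p - 1"
  then have e: "[1..<Suc (length (p @ z))] ! j = Suc j"
    by (subst nth_upt) auto
  show "\<not> is_var (T (take ([1..<Suc (length (p @ z))] ! j) (p @ z)))"
  proof
    assume "is_var (T (take ([1..<Suc (length (p @ z))] ! j) (p @ z)))"
    then obtain i' where "T (take (Suc j) p) = Some (Var i')"
      unfolding e is_var_def using j by auto
    then have "take (Suc j) p = p"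
      using tree_like_var_leaf[OF assms(1) _ take_is_prefix] assms(2) by simp
    then have "length (take (Suc j) p) = length p" by simp
    then show False using j by simp
  qed
qed

lemma go_Suc_var_leaf:
  assumes "S u = Some (Sym (T, k))" "tree_like T" "T [] = Some (Sym c)" "T p = Some (Var i)"
  shows "go (Suc f) S u (p @ z) = go f S (u @ [i]) z"
proof -
  have "p \<noteq> []" using assms(3,4) by auto
  note fnd = find_var_prefix[OF assms(2,4) this, of z]
  have no_sym: "T (p @ z) \<noteq> Some (Sym c')" for c'
    using tree_like_var_leaf[OF assms(2,4), of "p @ z"] assms(4) by fastforce
  show ?thesis
  proof (cases "T (p @ z)")
    case None
    then show ?thesis using assms(1,4) fnd by simp
  next
    case (Some l)
    then obtain j where "l = Var j" using no_sym by (cases l) auto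
    then show ?thesis using assms(1,4) fnd Some by simp
  qed
qed

lemma go_decomp:
  assumes "proper_ttree S" "decomp S u a" "length a \<le> f"
  shows "go f S u (concat a) = decomp_label S u a"
  using assms
proof (induction S u a arbitrary: f rule: decomp.induct)
  case (1 S u) then show ?case by simp
next
  case (2 S u p)
  then obtain f' where f: "f = Suc f'" by (cases f) auto
  show ?case
  proof (cases "S u")
    case None then show ?thesis using 2 by (simp add: component_None)
  next
    case (Some l)
    show ?thesis
    proof (cases l)
      case (Sym a0)
      obtain T k where a0: "a0 = (T, k)" by (cases a0)
      have Su: "S u = Some (Sym (T, k))" using Some Sym a0 by simp
      have "sym_vertex S u" using Su unfolding sym_vertex_def by auto
      then obtain c where "T p = Some (Sym c)" using 2 component_Sym[of S u T k, OF Su] by auto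
      then show ?thesis using Su f by (simp add: decomp_label_def component_Sym)
    next
      case (Var j)
      have Su: "S u = Some (Var j)" using Some Var by simp
      then have "p = []" using 2 by (simp add: component_Var split: if_splits)
      then show ?thesis using Su f by (simp add: decomp_label_def component_Var)
    qed
  qed
next
  case (3 S u p q r)
  then obtain f' where f: "f = Suc f'" by (cases f) auto
  obtain i where i: "sym_vertex S u" "component S u p = Some (Var i)" "decomp S (u @ [i]) (q # r)"
    using 3 by auto
  obtain T k where Su: "S u = Some (Sym (T, k))"
    using i(1) unfolding sym_vertex_def by auto
  then have "tree_like T" "\<exists>c. T [] = Some (Sym c)" "T p = Some (Var i)"
    using 3(2) i component_Sym[of S u T k, OF Su] unfolding proper_ttree_def by metis+
  then have "go f S u (concat (p # q # r)) = go f' S (u @ [i]) (concat (q # r))"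
    using go_Suc_var_leaf[of S u T k, OF Su] f by fastforce
  also have "\<dots> = decomp_label S (u @ [i]) (q # r)"
    using 3(1)[of i f'] i 3(2-) f by auto
  also have "\<dots> = decomp_label S u (p # q # r)"
    unfolding decomp_label_def using i(2) by simp
  finally show ?case .
qed

lemma length_decomp_le:
  assumes "proper_ttree S" "decomp S u a" shows "length a \<le> Suc (length (concat a))"
  using assms
proof (induction S u a rule: decomp.induct)
  case (3 S u p q r)
  obtain i where i: "sym_vertex S u" "component S u p = Some (Var i)" "decomp S (u @ [i]) (q # r)"
    using 3 by auto
  have "p \<noteq> []" using i 3(2) unfolding proper_ttree_def by force
  then have "length p \<ge> 1" by (cases p) auto
  then show ?case using 3(1)[of i, OF 3(2) i(3)] by simp
qed auto

lemma flat_concat_decomp: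
  assumes "proper_ttree S" "decomp S [] a"
  shows "flat S (concat a) = decomp_label S [] a"
  unfolding flat_def by (rule go_decomp[OF assms length_decomp_le[OF assms]])

lemma go_Suc_through_var:
  assumes "S u = Some (Sym (T, k))" "\<nexists>c. T w = Some (Sym c)" "go (Suc f) S u w \<noteq> None"
  obtains l i where "T (take l w) = Some (Var i)" "go f S (u @ [i]) (drop l w) \<noteq> None"
proof -
  let ?X = "case find (\<lambda>l. is_var (T (take l w))) [1..<Suc (length w)] of
      None \<Rightarrow> None
    | Some l \<Rightarrow> (case T (take l w) of Some (Var i) \<Rightarrow> go f S (u @ [i]) (drop l w) | _ \<Rightarrow> None)"
  have "go (Suc f) S u w = ?X"
  proof (cases "T w")
    case (Some l)
    then obtain j where "l = Var j" using assms(2) by (cases l) auto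
    then show ?thesis using assms(1) Some by simp
  qed (use assms(1) in simp)
  then obtain l where l: "find (\<lambda>l. is_var (T (take l w))) [1..<Suc (length w)] = Some l"
    and go: "(case T (take l w) of Some (Var i) \<Rightarrow> go f S (u @ [i]) (drop l w) | _ \<Rightarrow> None) \<noteq> None"
    using assms(3) by (auto split: option.splits)
  have "is_var (T (take l w))" using l unfolding find_Some_iff by auto
  then obtain i where "T (take l w) = Some (Var i)" unfolding is_var_def by auto
  then show ?thesis using that go by simp
qed

lemma go_imp_decomp:
  "go f S u w \<noteq> None \<Longrightarrow> \<exists>a. decomp S u a \<and> concat a = w"
proof (induction f arbitrary: u w)
  case 0
  then show ?case by simp
next
  case (Suc f)
  then obtain l where Su: "S u = Some l" by (cases "S u") auto
  show ?case
  proof (cases l)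
    case (Var j)
    then have "w = []" "decomp S u [[]]"
      using Suc.prems Su by (simp_all add: component_Var sym_vertex_def split: if_splits)
    then show ?thesis by (intro exI[of _ "[[]]"]) simp
  next
    case (Sym a0)
    with Su obtain T k where Su: "S u = Some (Sym (T, k))" by (cases a0) auto
    then have T: "component S u = T" "sym_vertex S u"
      using component_Sym[of S u T k] unfolding sym_vertex_def by auto
    show ?thesis
    proof (cases "\<exists>c. T w = Some (Sym c)")
      case True
      then have "decomp S u [w]" using T by auto
      then show ?thesis by (intro exI[of _ "[w]"]) simp
    next
      case False
      then obtain l i where Ti: "T (take l w) = Some (Var i)" and "go f S (u @ [i]) (drop l w) \<noteq> None"
        using go_Suc_through_var[OF Su _ Suc.prems] by blast
      then obtain q r where "decomp S (u @ [i]) (q # r)" "concat (q # r) = drop l w"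
        using Suc.IH by (metis decomp.simps(1) neq_Nil_conv)
      then have "decomp S u (take l w # q # r)" "concat (take l w # q # r) = w"
        using Ti T by auto
      then show ?thesis by blast
    qed
  qed
qed

lemma flat_imp_decomp: "flat S w \<noteq> None \<Longrightarrow> \<exists>a. decomp S [] a \<and> concat a = w"
  unfolding flat_def using go_imp_decomp by blast

lemma proper_ttree_tree_like: "proper_ttree S \<Longrightarrow> tree_like (component S u)"
  unfolding proper_ttree_def by blast

lemma decomp_prefix_head:
  assumes "proper_ttree S" "component S u p \<noteq> None" "decomp S u (p' # r')" "prefix p (p' @ concat r')"
  shows "prefix p p'"
proof (cases r')
  case (Cons q' r'')
  then obtain i' where i': "component S u p' = Some (Var i')"
    using assms(3) by auto
  from prefix_same_cases[OF assms(4), of p'] show ?thesis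
    using tree_like_var_leaf[OF proper_ttree_tree_like[OF assms(1)] i'] assms(2) by auto
qed (use assms(4) in simp)

lemma decomp_Cons_head_eq:
  assumes "proper_ttree S" "decomp S u (p # q # r)" "decomp S u (p' # r')" "prefix p (p' @ concat r')"
  shows "p = p'"
proof -
  obtain i where i: "component S u p = Some (Var i)"
    using assms(2) by auto
  have "component S u p' \<noteq> None"
    using assms(3) by (cases r') auto
  then show ?thesis
    using decomp_prefix_head[OF assms(1) _ assms(3,4)] i
      tree_like_var_leaf[OF proper_ttree_tree_like[OF assms(1)] i] by simp
qed

lemma prefix_concat_decompD:
  assumes "proper_ttree S" "decomp S u a" "decomp S u b" "prefix (concat a) (concat b)"
  shows "take (length a - 1) a = take (length a - 1) b \<and> length a - 1 < length b \<and>
         prefix (a ! (length a - 1)) (b ! (length a - 1))"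
  using assms(2-)
proof (induction a arbitrary: u b)
  case Nil
  then show ?case by simp
next
  case (Cons p r)
  obtain p' r' where b: "b = p' # r'" using Cons.prems(2) by (cases b) auto
  show ?case
  proof (cases r)
    case Nil
    then have "prefix p p'"
      using decomp_prefix_head[OF assms(1) _ Cons.prems(2)[unfolded b]] Cons.prems b by auto
    then show ?thesis using Nil b by simp
  next
    case (Cons q r0)
    obtain i where i: "sym_vertex S u" "component S u p = Some (Var i)" "decomp S (u @ [i]) (q # r0)"
      using Cons.prems(1) \<open>r = q # r0\<close> by auto
    have "prefix p (p' @ concat r')"
      using Cons.prems(3) b append_prefixD by auto
    then have "p = p'"
      using decomp_Cons_head_eq[OF assms(1)] Cons.prems(1,2) b \<open>r = q # r0\<close> by blast
    then obtain q' r0' where r': "r' = q' # r0'" "decomp S (u @ [i]) (q' # r0')"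
      using Cons.prems(2) b i by (cases r') auto
    have "take (length r - 1) r = take (length r - 1) r' \<and> length r - 1 < length r' \<and>
        prefix (r ! (length r - 1)) (r' ! (length r - 1))"
      using Cons.IH[of "u @ [i]" r'] i(3) r' Cons.prems(3) b \<open>p = p'\<close> \<open>r = q # r0\<close> by simp
    then show ?thesis using b \<open>p = p'\<close> \<open>r = q # r0\<close> by simp
  qed
qed

lemma prefix_concat_decompI:
  assumes "a \<noteq> []" "k = length a - 1" "take k a = take k b" "k < length b" "prefix (a ! k) (b ! k)"
  shows "prefix (concat a) (concat b)"
proof -
  have ka: "k < length a" using assms(1,2) by simp
  have "concat a = concat (take k a) @ a ! k" using concat_last[OF assms(1)] assms(2) by simp
  moreover have "concat b = concat (take k b) @ b ! k @ concat (drop (Suc k) b)"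
    using concat_take_nth[OF assms(4)] .
  ultimately show ?thesis using assms(3,5) by (auto simp: prefix_def)
qed

lemma decomp_inj:
  assumes "proper_ttree S" "decomp S u a" "decomp S u b" "concat a = concat b"
  shows "a = b"
proof -
  have A: "take (length a - 1) a = take (length a - 1) b \<and> length a - 1 < length b \<and>
         prefix (a ! (length a - 1)) (b ! (length a - 1))"
    using prefix_concat_decompD[OF assms(1-3)] assms(4) by simp
  have B: "take (length b - 1) b = take (length b - 1) a \<and> length b - 1 < length a \<and>
         prefix (b ! (length b - 1)) (a ! (length b - 1))"
    using prefix_concat_decompD[OF assms(1,3,2)] assms(4) by simp
  have ne: "a \<noteq> []" "b \<noteq> []" using assms(2,3) decomp_not_Nil by blast+
  then have L: "length a = length b" using A B by linarith
  define k where "k = length a - 1"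
  have ab: "a ! k = b ! k" using A B L unfolding k_def by (simp add: prefix_order.antisym)
  have "a = take k a @ [a ! k]" using ne unfolding k_def
    by (metis append_butlast_last_id butlast_conv_take last_conv_nth)
  moreover have "b = take k b @ [b ! k]" using ne L unfolding k_def
    by (metis append_butlast_last_id butlast_conv_take last_conv_nth)
  ultimately show ?thesis using A ab unfolding k_def by metis
qed

lemma decomp_last_segment_neq:
  assumes "decomp S u a" "decomp S u b" "take (length a - 1) a = take (length a - 1) b"
    "length a < length b"
  shows "b ! (length a - 1) \<noteq> a ! (length a - 1)"
proof -
  let ?k = "length a - 1"
  have k: "Suc ?k = length a"
    using decomp_not_Nil[OF assms(1)] by simp
  have v: "decomp_vertex S u a ?k = decomp_vertex S u b ?k"
    by (rule decomp_vertex_take[OF assms(3)])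
  have "sym_vertex S (decomp_vertex S u a ?k) \<longrightarrow>
      (\<exists>c. component S (decomp_vertex S u a ?k) (a ! ?k) = Some (Sym c))"
    using decomp_stepD[OF assms(1), of ?k] k unfolding decomp_step_def Let_def by simp
  moreover have "sym_vertex S (decomp_vertex S u b ?k) \<and>
      (\<exists>i. component S (decomp_vertex S u b ?k) (b ! ?k) = Some (Var i))"
    using decomp_stepD[OF assms(2), of ?k] k assms(4) unfolding decomp_step_def Let_def by simp
  ultimately show ?thesis using v by auto
qed

lemma decomp_prefix_eq:
  assumes "decomp S u a" "decomp S u b" "prefix a b"
  shows "a = b"
proof (rule ccontr)
  assume "a \<noteq> b"
  then have lt: "length a < length b"
    using assms(3) by (simp add: prefix_length_less prefix_order.less_le)
  obtain z where "b = a @ z" using assms(3) by (auto elim: prefixE)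
  then show False
    using decomp_last_segment_neq[OF assms(1,2) _ lt] decomp_not_Nil[OF assms(1)] by (simp add: nth_append)
qed

lemma concat_decomp_Nil_iff:
  assumes "proper_ttree S" "decomp S u a"
  shows "concat a = [] \<longleftrightarrow> (length a = 1 \<and> a ! 0 = [])"
proof
  assume h: "concat a = []"
  have ne: "a \<noteq> []" using decomp_not_Nil[OF assms(2)] .
  have "a ! 0 = []" using h ne by (metis concat_eq_Nil_conv nth_mem length_greater_0_conv)
  moreover have "length a = 1"
  proof (rule ccontr)
    assume "length a \<noteq> 1"
    then have "Suc 0 < length a" using ne by (cases a) auto
    then have "a ! 0 \<noteq> []" using decomp_inner_segment_not_Nil[OF assms, of 0] by simp
    then show False using \<open>a ! 0 = []\<close> by simp
  qed
  ultimately show "length a = 1 \<and> a ! 0 = []" by simp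
next
  assume "length a = 1 \<and> a ! 0 = []"
  then have "a = [[]]" by (cases a) auto
  then show "concat a = []" by simp
qed

lemma concat_decomp_snocD:
  assumes "proper_ttree S" "decomp S u a" "decomp S u b" "k = length a - 1"
    and snoc: "concat b = concat a @ [i]"
  shows "take k a = take k b \<and> k < length b \<and> b ! k = a ! k @ [i] \<and>
     (length b = Suc k \<or> (length b = Suc (Suc k) \<and> b ! Suc k = []))"
proof -
  have "prefix (concat a) (concat b)" using snoc by simp
  then have T: "take k a = take k b" "k < length b" "prefix (a ! k) (b ! k)"
    using prefix_concat_decompD[OF assms(1-3)] assms(4) by auto
  obtain z where z: "b ! k = a ! k @ z" using T(3) by (auto elim: prefixE)
  have "concat b = concat (take k a) @ b ! k @ concat (drop (Suc k) b)"
    using concat_take_nth[OF T(2)] T(1) by simp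
  moreover have "concat a = concat (take k a) @ a ! k"
    using concat_last[OF decomp_not_Nil[OF assms(2)]] assms(4) by simp
  ultimately have rest: "z @ concat (drop (Suc k) b) = [i]"
    using snoc z by simp
  show ?thesis
  proof (cases "Suc k = length b")
    case True
    then show ?thesis using T z rest by simp
  next
    case False
    then have lt: "Suc k < length b" using T(2) by simp
    have "Suc k = length a"
      using decomp_not_Nil[OF assms(2)] assms(4) by simp
    then have "z \<noteq> []"
      using decomp_last_segment_neq[OF assms(2,3)] T(1) lt z assms(4) by auto
    then have "z = [i]" "concat (drop (Suc k) b) = []"
      using rest by (cases z; auto)+
    moreover from this(2) have "b ! Suc k = []"
      using lt by (metis concat_eq_Nil_conv Cons_nth_drop_Suc list.set_intros(1))
    moreover have "length b = Suc (Suc k)"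
      using decomp_inner_segment_not_Nil[OF assms(1,3), of "Suc k"] lt calculation(3)
      by (cases "Suc (Suc k) < length b") auto
    ultimately show ?thesis using T z by simp
  qed
qed

lemma concat_decomp_snoc_iff:
  assumes "proper_ttree S" "decomp S u a" "decomp S u b" "k = length a - 1"
  shows "concat b = concat a @ [i] \<longleftrightarrow> (take k a = take k b \<and> k < length b \<and> b ! k = a ! k @ [i] \<and>
     (length b = Suc k \<or> (length b = Suc (Suc k) \<and> b ! Suc k = [])))"
proof
  assume h: "take k a = take k b \<and> k < length b \<and> b ! k = a ! k @ [i] \<and>
     (length b = Suc k \<or> (length b = Suc (Suc k) \<and> b ! Suc k = []))"
  have "concat (drop (Suc k) b) = []"
  proof (cases "length b = Suc k")
    case False
    then have "length b = Suc (Suc k)" "b ! Suc k = []" using h by auto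
    then have "drop (Suc k) b = [[]]" by (metis Cons_nth_drop_Suc drop_all lessI order_refl)
    then show ?thesis by simp
  qed simp
  then show "concat b = concat a @ [i]"
    using concat_take_nth[of k b] concat_last[OF decomp_not_Nil[OF assms(2)]] assms(4) h by simp
qed (rule concat_decomp_snocD[OF assms])

lemma take_decomp_eq_iff:
  assumes "decomp S u a" "decomp S u c" "length a \<le> j"
  shows "take j a = take j c \<longleftrightarrow> take (length a) a = take (length a) c"
proof
  assume "take j a = take j c"
  then have "take (length a) (take j a) = take (length a) (take j c)" by simp
  then show "take (length a) a = take (length a) c" using assms(3) by (simp add: min_def)
next
  assume "take (length a) a = take (length a) c"
  then have "a = take (length a) c" by simp
  then have "prefix a c" by (metis take_is_prefix)
  then have "a = c" using decomp_prefix_eq[OF assms(1,2)] by blast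
  then show "take j a = take j c" by simp
qed

lemma decomp_label_not_None:
  assumes "decomp S u a" shows "decomp_label S u a \<noteq> None"
proof -
  have ne: "a \<noteq> []" using decomp_not_Nil[OF assms] .
  have "decomp_step S u a (length a - 1)" using decomp_stepD[OF assms] ne by simp
  then have "component S (decomp_vertex S u a (length a - 1)) (a ! (length a - 1)) \<noteq> None"
    using ne unfolding decomp_step_def Let_def by simp
  then show ?thesis unfolding decomp_label_def using ne by (simp add: last_conv_nth)
qed

lemma prefix_concat_decomp_iff:
  assumes "proper_ttree S" "decomp S u a" "decomp S u b" "k = length a - 1"
  shows "prefix (concat a) (concat b) \<longleftrightarrow> take k a = take k b \<and> k < length b \<and> prefix (a ! k) (b ! k)"
  using prefix_concat_decompD[OF assms(1-3)] prefix_concat_decompI[OF decomp_not_Nil[OF assms(2)] assms(4)] assms(4)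
  by blast

section \<open>Composing strategies along a tree of trees\<close>

text \<open>A pebble on a vertex of \<open>flat S\<close> is recorded by the decomposition of that vertex.
  \<open>local_pebbles C\<close> keeps the pebbles whose decomposition starts with the segments C, placed on
  their next segment: these are the pebbles lying in the component reached through C.\<close>

type_synonym dpebbles = "nat \<Rightarrow> nat list list option"

definition local_pebbles :: "nat list list \<Rightarrow> dpebbles \<Rightarrow> pebbles" where
  "local_pebbles C pa y = (case pa y of None \<Rightarrow> None
     | Some a \<Rightarrow> if length C < length a \<and> take (length C) a = C then Some (a ! length C) else None)"

definition flat_pebbles :: "dpebbles \<Rightarrow> pebbles" where
  "flat_pebbles pa = (\<lambda>x. map_option concat (pa x))"

lemma flat_pebbles_fun_upd: "flat_pebbles (pa(x := Some a)) = (flat_pebbles pa)(x := Some (concat a))"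
  unfolding flat_pebbles_def by (rule ext) simp

lemma local_pebbles_self:
  "pa x = Some a \<Longrightarrow> j < length a \<Longrightarrow> local_pebbles (take j a) pa x = Some (a ! j)"
  unfolding local_pebbles_def by simp

lemma local_pebbles_other:
  assumes "pa y = Some b" "j < length b" "take j b = take j a" "j \<le> length a"
  shows "local_pebbles (take j a) pa y = Some (b ! j)"
  using assms unfolding local_pebbles_def by (simp add: min_def)

lemma local_pebbles_None: "pa x = None \<Longrightarrow> local_pebbles C pa x = None"
  unfolding local_pebbles_def by simp

lemma local_pebbles_unpebble: "local_pebbles C (pa(x := None)) = (local_pebbles C pa)(x := None)"
  unfolding local_pebbles_def by (rule ext) simp

lemma local_pebbles_fun_upd:
  "local_pebbles C (pa(x := Some a)) =
    (local_pebbles C pa)(x :=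
      (if length C < length a \<and> take (length C) a = C then Some (a ! length C) else None))"
  unfolding local_pebbles_def by (rule ext) simp

lemma local_pebbles_fun_upd_take:
  assumes "pa x = None" "j < length c"
  shows "local_pebbles (take j c) (pa(x:=Some a)) =
    (if j < length a \<and> take j a = take j c then (local_pebbles (take j a) pa)(x:=Some (a!j))
     else local_pebbles (take j c) pa)"
  using assms local_pebbles_None[of pa x] by (auto simp: local_pebbles_fun_upd min_def)

lemma local_pebbles_eq_empty:
  "local_pebbles C pa = (\<lambda>_. None) \<longleftrightarrow>
     (\<forall>y c. pa y = Some c \<longrightarrow> \<not> (length C < length c \<and> take (length C) c = C))"
  unfolding local_pebbles_def by (auto simp: fun_eq_iff split: option.splits if_splits)

text \<open>The invariant of the composed strategy: corresponding pebbles pass through the same vertices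
  of S and T, and at each of these vertices the pebbles lying in that component form a position
  that is winning for m more rounds of the game on the two components.\<close>

definition comp_inv :: "nat set \<Rightarrow> 'c ttree \<Rightarrow> 'c ttree \<Rightarrow> nat \<Rightarrow> dpebbles \<Rightarrow> dpebbles \<Rightarrow> bool" where
  "comp_inv V S T m pa pa' \<longleftrightarrow>
    (\<forall>y. y \<notin> V \<longrightarrow> pa y = None \<and> pa' y = None) \<and>
    (\<forall>x\<in>V. pa x = None \<longleftrightarrow> pa' x = None) \<and>
    (\<forall>x a. pa x = Some a \<longrightarrow> decomp S [] a) \<and> (\<forall>x a'. pa' x = Some a' \<longrightarrow> decomp T [] a') \<and>
    (\<forall>x a a'. pa x = Some a \<longrightarrow> pa' x = Some a' \<longrightarrow> length a = length a' \<and>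
       (\<forall>j<length a. decomp_vertex S [] a j = decomp_vertex T [] a' j \<and>
          ef_equiv V m (component S (decomp_vertex S [] a j)) (local_pebbles (take j a) pa)
            (component T (decomp_vertex S [] a j)) (local_pebbles (take j a') pa'))) \<and>
    (\<forall>x y a a' b b'. pa x = Some a \<longrightarrow> pa' x = Some a' \<longrightarrow> pa y = Some b \<longrightarrow> pa' y = Some b' \<longrightarrow>
       (\<forall>j. take j a = take j b \<longleftrightarrow> take j a' = take j b'))"

lemma comp_invI:
  assumes "\<And>y. y \<notin> V \<Longrightarrow> pa y = None" "\<And>y. y \<notin> V \<Longrightarrow> pa' y = None"
    "\<And>x. x \<in> V \<Longrightarrow> pa x = None \<longleftrightarrow> pa' x = None"
    "\<And>x a. pa x = Some a \<Longrightarrow> decomp S [] a" "\<And>x a'. pa' x = Some a' \<Longrightarrow> decomp T [] a'"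
    "\<And>x a a'. pa x = Some a \<Longrightarrow> pa' x = Some a' \<Longrightarrow> length a = length a'"
    "\<And>x a a' j. pa x = Some a \<Longrightarrow> pa' x = Some a' \<Longrightarrow> j < length a \<Longrightarrow>
      decomp_vertex S [] a j = decomp_vertex T [] a' j"
    "\<And>x a a' j. pa x = Some a \<Longrightarrow> pa' x = Some a' \<Longrightarrow> j < length a \<Longrightarrow>
      ef_equiv V m (component S (decomp_vertex S [] a j)) (local_pebbles (take j a) pa)
        (component T (decomp_vertex S [] a j)) (local_pebbles (take j a') pa')"
    "\<And>x y a a' b b' j. pa x = Some a \<Longrightarrow> pa' x = Some a' \<Longrightarrow> pa y = Some b \<Longrightarrow> pa' y = Some b' \<Longrightarrow>
      take j a = take j b \<longleftrightarrow> take j a' = take j b'"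
  shows "comp_inv V S T m pa pa'"
  unfolding comp_inv_def
proof (intro conjI)
  show "\<forall>y. y \<notin> V \<longrightarrow> pa y = None \<and> pa' y = None"
    using assms(1,2) by blast
  show "\<forall>x\<in>V. pa x = None \<longleftrightarrow> pa' x = None"
    using assms(3) by blast
  show "\<forall>x a. pa x = Some a \<longrightarrow> decomp S [] a" "\<forall>x a'. pa' x = Some a' \<longrightarrow> decomp T [] a'"
    using assms(4,5) by blast+
  show "\<forall>x a a'. pa x = Some a \<longrightarrow> pa' x = Some a' \<longrightarrow> length a = length a' \<and>
      (\<forall>j<length a. decomp_vertex S [] a j = decomp_vertex T [] a' j \<and>
        ef_equiv V m (component S (decomp_vertex S [] a j)) (local_pebbles (take j a) pa)
          (component T (decomp_vertex S [] a j)) (local_pebbles (take j a') pa'))"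
    using assms(6-8) by blast
  show "\<forall>x y a a' b b'. pa x = Some a \<longrightarrow> pa' x = Some a' \<longrightarrow> pa y = Some b \<longrightarrow> pa' y = Some b' \<longrightarrow>
      (\<forall>j. take j a = take j b \<longleftrightarrow> take j a' = take j b')"
    using assms(9) by blast
qed

lemma
  assumes "comp_inv V S T m pa pa'"
  shows comp_inv_outside: "y \<notin> V \<Longrightarrow> pa y = None" "y \<notin> V \<Longrightarrow> pa' y = None"
    and comp_inv_None_iff: "x \<in> V \<Longrightarrow> pa x = None \<longleftrightarrow> pa' x = None"
    and comp_inv_decomp: "pa x = Some a \<Longrightarrow> decomp S [] a" "pa' x = Some a' \<Longrightarrow> decomp T [] a'"
    and comp_inv_length: "pa x = Some a \<Longrightarrow> pa' x = Some a' \<Longrightarrow> length a = length a'"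
    and comp_inv_vertex: "pa x = Some a \<Longrightarrow> pa' x = Some a' \<Longrightarrow> j < length a \<Longrightarrow>
      decomp_vertex S [] a j = decomp_vertex T [] a' j"
    and comp_inv_ef: "pa x = Some a \<Longrightarrow> pa' x = Some a' \<Longrightarrow> j < length a \<Longrightarrow>
      ef_equiv V m (component S (decomp_vertex S [] a j)) (local_pebbles (take j a) pa)
        (component T (decomp_vertex S [] a j)) (local_pebbles (take j a') pa')"
    and comp_inv_take_iff: "pa x = Some a \<Longrightarrow> pa' x = Some a' \<Longrightarrow> pa y = Some b \<Longrightarrow> pa' y = Some b' \<Longrightarrow>
      take j a = take j b \<longleftrightarrow> take j a' = take j b'"
proof -
  note inv = assms[unfolded comp_inv_def]
  show "y \<notin> V \<Longrightarrow> pa y = None" "y \<notin> V \<Longrightarrow> pa' y = None"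
    using conjunct1[OF inv] by blast+
  show "x \<in> V \<Longrightarrow> pa x = None \<longleftrightarrow> pa' x = None"
    using conjunct1[OF conjunct2[OF inv]] by blast
  show "pa x = Some a \<Longrightarrow> decomp S [] a" "pa' x = Some a' \<Longrightarrow> decomp T [] a'"
    using conjunct1[OF conjunct2[OF conjunct2[OF inv]]]
      conjunct1[OF conjunct2[OF conjunct2[OF conjunct2[OF inv]]]]
    by blast+
  note pairs = conjunct1[OF conjunct2[OF conjunct2[OF conjunct2[OF conjunct2[OF inv]]]]]
  show "pa x = Some a \<Longrightarrow> pa' x = Some a' \<Longrightarrow> length a = length a'"
    using pairs by blast
  show "pa x = Some a \<Longrightarrow> pa' x = Some a' \<Longrightarrow> j < length a \<Longrightarrow>
      decomp_vertex S [] a j = decomp_vertex T [] a' j"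
    using pairs by blast
  show "pa x = Some a \<Longrightarrow> pa' x = Some a' \<Longrightarrow> j < length a \<Longrightarrow>
      ef_equiv V m (component S (decomp_vertex S [] a j)) (local_pebbles (take j a) pa)
        (component T (decomp_vertex S [] a j)) (local_pebbles (take j a') pa')"
    using pairs by blast
  show "pa x = Some a \<Longrightarrow> pa' x = Some a' \<Longrightarrow> pa y = Some b \<Longrightarrow> pa' y = Some b' \<Longrightarrow>
      take j a = take j b \<longleftrightarrow> take j a' = take j b'"
    using conjunct2[OF conjunct2[OF conjunct2[OF conjunct2[OF conjunct2[OF inv]]]]] by blast
qed

lemma comp_inv_Some_in:
  assumes "comp_inv V S T m pa pa'"
  shows "pa y = Some c \<Longrightarrow> y \<in> V" "pa' y = Some c' \<Longrightarrow> y \<in> V"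
  using comp_inv_outside[OF assms, of y] by auto

lemma comp_inv_unpebble:
  assumes inv: "comp_inv V S T m pa pa'"
  shows "comp_inv V S T m (pa(x:=None)) (pa'(x:=None))"
proof (rule comp_invI)
  fix z c c' j
  assume "(pa(x:=None)) z = Some c" "(pa'(x:=None)) z = Some c'"
  then have zc: "pa z = Some c" "pa' z = Some c'"
    by (auto split: if_splits)
  show "length c = length c'"
    using comp_inv_length[OF inv zc] .
  assume j: "j < length c"
  show "decomp_vertex S [] c j = decomp_vertex T [] c' j"
    using comp_inv_vertex[OF inv zc j] .
  show "ef_equiv V m (component S (decomp_vertex S [] c j)) (local_pebbles (take j c) (pa(x:=None)))
      (component T (decomp_vertex S [] c j)) (local_pebbles (take j c') (pa'(x:=None)))"
    unfolding local_pebbles_unpebble using ef_equiv_unpebble[OF comp_inv_ef[OF inv zc j]] .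
next
  fix z y c c' d d' j
  assume "(pa(x:=None)) z = Some c" "(pa'(x:=None)) z = Some c'"
    "(pa(x:=None)) y = Some d" "(pa'(x:=None)) y = Some d'"
  then have "pa z = Some c" "pa' z = Some c'" "pa y = Some d" "pa' y = Some d'"
    by (auto split: if_splits)
  then show "take j c = take j d \<longleftrightarrow> take j c' = take j d'"
    by (rule comp_inv_take_iff[OF inv])
qed (use comp_inv_outside[OF inv] comp_inv_None_iff[OF inv] comp_inv_decomp[OF inv] in
    \<open>auto split: if_splits\<close>)

lemma comp_inv_swap:
  assumes inv: "comp_inv V S T m pa pa'"
  shows "comp_inv V T S m pa' pa"
proof (rule comp_invI)
  fix z c' c j
  assume zc: "pa' z = Some c'" "pa z = Some c"
  show "length c' = length c"
    using comp_inv_length[OF inv zc(2,1)] by simp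
  assume "j < length c'"
  then have j: "j < length c"
    using comp_inv_length[OF inv zc(2,1)] by simp
  show "decomp_vertex T [] c' j = decomp_vertex S [] c j"
    using comp_inv_vertex[OF inv zc(2,1) j] by simp
  show "ef_equiv V m (component T (decomp_vertex T [] c' j)) (local_pebbles (take j c') pa')
      (component S (decomp_vertex T [] c' j)) (local_pebbles (take j c) pa)"
    using comp_inv_vertex[OF inv zc(2,1) j] ef_equiv_sym[OF comp_inv_ef[OF inv zc(2,1) j]] by simp
next
  fix z y c' c d' d j
  assume "pa' z = Some c'" "pa z = Some c" "pa' y = Some d'" "pa y = Some d"
  then show "take j c' = take j d' \<longleftrightarrow> take j c = take j d"
    using comp_inv_take_iff[OF inv] by blast
qed (use comp_inv_outside[OF inv] comp_inv_None_iff[OF inv] comp_inv_decomp[OF inv] in blast)+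

lemma comp_inv_segment:
  assumes inv: "comp_inv V S T m pa pa'" and x: "x \<in> V" "pa x = Some a" "pa' x = Some a'"
    and j: "j < length a"
  shows "component S (decomp_vertex S [] a j) (a ! j) = component T (decomp_vertex S [] a j) (a' ! j)"
    and "a ! j = [] \<longleftrightarrow> a' ! j = []"
proof -
  have "j < length a'" using j comp_inv_length[OF inv x(2,3)] by simp
  then have "local_pebbles (take j a) pa x = Some (a ! j)" "local_pebbles (take j a') pa' x = Some (a' ! j)"
    using local_pebbles_self x j by metis+
  note iso = partial_isoD[OF ef_equiv_partial_iso[OF comp_inv_ef[OF inv x(2,3) j]] x(1) x(1) this(1,1,2,2)]
  show "component S (decomp_vertex S [] a j) (a ! j) = component T (decomp_vertex S [] a j) (a' ! j)"
    "a ! j = [] \<longleftrightarrow> a' ! j = []"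
    using iso(1,2) .
qed

lemma comp_inv_segment_pair:
  assumes inv: "comp_inv V S T m pa pa'"
    and x: "x \<in> V" "pa x = Some a" "pa' x = Some a'" and y: "y \<in> V" "pa y = Some b" "pa' y = Some b'"
    and j: "j < length a" "j < length b" "take j a = take j b"
  shows "prefix (a ! j) (b ! j) \<longleftrightarrow> prefix (a' ! j) (b' ! j)"
    and "b ! j = a ! j @ [i] \<longleftrightarrow> b' ! j = a' ! j @ [i]"
proof -
  have len: "length a = length a'" "length b = length b'"
    using comp_inv_length[OF inv] x y by blast+
  have "take j a' = take j b'"
    using comp_inv_take_iff[OF inv x(2,3) y(2,3)] j(3) by blast
  then have "local_pebbles (take j a) pa x = Some (a ! j)" "local_pebbles (take j a) pa y = Some (b ! j)"
    "local_pebbles (take j a') pa' x = Some (a' ! j)" "local_pebbles (take j a') pa' y = Some (b' ! j)"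
    using local_pebbles_self local_pebbles_other x y j len by metis+
  note iso = partial_isoD[OF ef_equiv_partial_iso[OF comp_inv_ef[OF inv x(2,3) j(1)]] x(1) y(1) this]
  show "prefix (a ! j) (b ! j) \<longleftrightarrow> prefix (a' ! j) (b' ! j)"
    "b ! j = a ! j @ [i] \<longleftrightarrow> b' ! j = a' ! j @ [i]"
    using iso(4,5) .
qed

context
  fixes V S T m pa pa' x y a a' b b'
  assumes S: "proper_ttree S" and T: "proper_ttree T" and inv: "comp_inv V S T m pa pa'"
    and x: "x \<in> V" "pa x = Some a" "pa' x = Some a'" and y: "y \<in> V" "pa y = Some b" "pa' y = Some b'"
begin

lemma comp_inv_pair_facts:
  shows "decomp S [] a" "decomp T [] a'" "decomp S [] b" "decomp T [] b'"
    and "length a = length a'" "length b = length b'" "0 < length a"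
  using comp_inv_decomp[OF inv] comp_inv_length[OF inv] decomp_not_Nil[of S "[]" a] x y by blast+

lemma flat_concat_comp_inv: "flat S (concat a) = flat T (concat a')"
proof -
  note facts = comp_inv_pair_facts
  let ?k = "length a - 1"
  have "flat S (concat a) = component S (decomp_vertex S [] a ?k) (a ! ?k)"
    using flat_concat_decomp[OF S facts(1)] facts(7) unfolding decomp_label_def by (simp add: last_conv_nth)
  also have "\<dots> = component T (decomp_vertex T [] a' ?k) (a' ! ?k)"
    using comp_inv_segment(1)[OF inv x, of ?k] comp_inv_vertex[OF inv x(2,3), of ?k] facts(7) by simp
  also have "\<dots> = flat T (concat a')"
    using flat_concat_decomp[OF T facts(2)] facts(5,7) unfolding decomp_label_def
    by (simp add: last_conv_nth)
  finally show ?thesis .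
qed

lemma concat_Nil_iff_comp_inv: "concat a = [] \<longleftrightarrow> concat a' = []"
  using concat_decomp_Nil_iff[OF S comp_inv_pair_facts(1)] concat_decomp_Nil_iff[OF T comp_inv_pair_facts(2)]
    comp_inv_segment(2)[OF inv x comp_inv_pair_facts(7)] comp_inv_pair_facts(5) by simp

lemma concat_eq_iff_comp_inv: "concat a = concat b \<longleftrightarrow> concat a' = concat b'"
proof -
  note facts = comp_inv_pair_facts
  define N where "N = max (length a) (length b)"
  have "concat a = concat b \<longleftrightarrow> take N a = take N b"
    using decomp_inj[OF S facts(1,3)] by (auto simp: N_def)
  also have "\<dots> \<longleftrightarrow> take N a' = take N b'"
    by (rule comp_inv_take_iff[OF inv x(2,3) y(2,3)])
  also have "\<dots> \<longleftrightarrow> concat a' = concat b'"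
    using decomp_inj[OF T facts(2,4)] facts(5,6) by (auto simp: N_def)
  finally show ?thesis .
qed

lemma same_prefix_comp_inv:
  "take (length a - 1) a = take (length a - 1) b \<and> length a - 1 < length b \<longleftrightarrow>
   take (length a - 1) a' = take (length a - 1) b' \<and> length a - 1 < length b'"
  using comp_inv_take_iff[OF inv x(2,3) y(2,3)] comp_inv_pair_facts(6) by simp

lemma prefix_concat_iff_comp_inv: "prefix (concat a) (concat b) \<longleftrightarrow> prefix (concat a') (concat b')"
proof -
  note facts = comp_inv_pair_facts
  let ?k = "length a - 1"
  have "prefix (concat a) (concat b) \<longleftrightarrow> take ?k a = take ?k b \<and> ?k < length b \<and> prefix (a ! ?k) (b ! ?k)"
    using prefix_concat_decomp_iff[OF S facts(1,3)] by simp
  also have "\<dots> \<longleftrightarrow> take ?k a' = take ?k b' \<and> ?k < length b' \<and> prefix (a' ! ?k) (b' ! ?k)"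
    using same_prefix_comp_inv comp_inv_segment_pair(1)[OF inv x y] facts(7) by auto
  also have "\<dots> \<longleftrightarrow> prefix (concat a') (concat b')"
    using prefix_concat_decomp_iff[OF T facts(2,4)] facts(5) by simp
  finally show ?thesis .
qed

lemma concat_snoc_iff_comp_inv: "concat b = concat a @ [i] \<longleftrightarrow> concat b' = concat a' @ [i]"
proof -
  note facts = comp_inv_pair_facts
  let ?k = "length a - 1"
  have last_empty: "length b = Suc (Suc ?k) \<and> b ! Suc ?k = [] \<longleftrightarrow> length b' = Suc (Suc ?k) \<and> b' ! Suc ?k = []"
    using comp_inv_segment(2)[OF inv y, of "Suc ?k"] facts(6) by auto
  have "concat b = concat a @ [i] \<longleftrightarrow> take ?k a = take ?k b \<and> ?k < length b \<and> b ! ?k = a ! ?k @ [i] \<and>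
      (length b = Suc ?k \<or> length b = Suc (Suc ?k) \<and> b ! Suc ?k = [])"
    using concat_decomp_snoc_iff[OF S facts(1,3)] by simp
  also have "\<dots> \<longleftrightarrow> take ?k a' = take ?k b' \<and> ?k < length b' \<and> b' ! ?k = a' ! ?k @ [i] \<and>
      (length b' = Suc ?k \<or> length b' = Suc (Suc ?k) \<and> b' ! Suc ?k = [])"
    using same_prefix_comp_inv comp_inv_segment_pair(2)[OF inv x y] last_empty facts(6,7) by auto
  also have "\<dots> \<longleftrightarrow> concat b' = concat a' @ [i]"
    using concat_decomp_snoc_iff[OF T facts(2,4)] facts(5) by simp
  finally show ?thesis .
qed

end

lemma partial_iso_flat:
  assumes S: "proper_ttree S" and T: "proper_ttree T" and inv: "comp_inv V S T m pa pa'"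
  shows "partial_iso V (flat S) (flat_pebbles pa) (flat T) (flat_pebbles pa')"
  unfolding partial_iso_def
proof (intro ballI conjI allI impI)
  fix x assume "x \<in> V"
  then show "flat_pebbles pa x = None \<longleftrightarrow> flat_pebbles pa' x = None"
    using comp_inv_None_iff[OF inv] unfolding flat_pebbles_def by simp
next
  fix x y A A' B B' i
  assume xy: "x \<in> V" "y \<in> V" and pebbled: "flat_pebbles pa x = Some A" "flat_pebbles pa' x = Some A'"
    "flat_pebbles pa y = Some B" "flat_pebbles pa' y = Some B'"
  then obtain a a' b b' where x: "pa x = Some a" "pa' x = Some a'" and y: "pa y = Some b" "pa' y = Some b'"
    and "A = concat a" "A' = concat a'" "B = concat b" "B' = concat b'"
    unfolding flat_pebbles_def by auto
  then show "flat S A = flat T A'" "A = [] \<longleftrightarrow> A' = []" "A = B \<longleftrightarrow> A' = B'"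
    "prefix A B \<longleftrightarrow> prefix A' B'" "B = A @ [i] \<longleftrightarrow> B' = A' @ [i]"
    using flat_concat_comp_inv[OF S T inv xy(1) x xy(2) y]
      concat_Nil_iff_comp_inv[OF S T inv xy(1) x xy(2) y]
      concat_eq_iff_comp_inv[OF S T inv xy(1) x xy(2) y]
      prefix_concat_iff_comp_inv[OF S T inv xy(1) x xy(2) y]
      concat_snoc_iff_comp_inv[OF S T inv xy(1) x xy(2) y]
    by simp_all
qed

locale componentwise_ef =
  fixes V :: "nat set" and r :: nat and S T :: "'c ttree"
  assumes proper_S: "proper_ttree S" and proper_T: "proper_ttree T"
    and sym_vertex_iff: "\<And>u. sym_vertex S u \<longleftrightarrow> sym_vertex T u"
    and component_ef: "\<And>u. ef_equiv V r (component S u) (\<lambda>_. None) (component T u) (\<lambda>_. None)"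
begin

lemma componentwise_ef_swap: "componentwise_ef V r T S"
  by unfold_locales (use proper_S proper_T sym_vertex_iff ef_equiv_sym[OF component_ef] in auto)

text \<open>Duplicator answers a move to the vertex with decomposition a segment by segment: b answers
  the first \<open>length b\<close> segments, and in each component along the way the reply keeps the game
  on that component winning for m further rounds.\<close>

definition partial_reply ::
    "nat \<Rightarrow> nat \<Rightarrow> dpebbles \<Rightarrow> dpebbles \<Rightarrow> nat list list \<Rightarrow> nat list list \<Rightarrow> bool" where
  "partial_reply m x pa pa' a b \<longleftrightarrow>
    (\<forall>i\<le>length b. decomp_vertex S [] a i = decomp_vertex T [] b i) \<and>
    (\<forall>y c c'. pa y = Some c \<longrightarrow> pa' y = Some c' \<longrightarrow>
       (\<forall>i\<le>length b. take i a = take i c \<longleftrightarrow> take i b = take i c')) \<and>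
    (\<forall>i<length b. ef_equiv V m
       (component S (decomp_vertex S [] a i)) ((local_pebbles (take i a) pa)(x:=Some (a!i)))
       (component T (decomp_vertex S [] a i)) ((local_pebbles (take i b) pa')(x:=Some (b!i))))"

lemma
  assumes "partial_reply m x pa pa' a b"
  shows partial_reply_vertex: "i \<le> length b \<Longrightarrow> decomp_vertex S [] a i = decomp_vertex T [] b i"
    and partial_reply_take_iff: "pa y = Some c \<Longrightarrow> pa' y = Some c' \<Longrightarrow> i \<le> length b \<Longrightarrow>
      take i a = take i c \<longleftrightarrow> take i b = take i c'"
    and partial_reply_ef: "i < length b \<Longrightarrow> ef_equiv V m
      (component S (decomp_vertex S [] a i)) ((local_pebbles (take i a) pa)(x:=Some (a!i)))
      (component T (decomp_vertex S [] a i)) ((local_pebbles (take i b) pa')(x:=Some (b!i)))"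
  using assms unfolding partial_reply_def by blast+

context
  fixes m x pa pa' a
  assumes inv: "comp_inv V S T (Suc m) pa pa'" and x: "x \<in> V" "pa x = None"
    and m_le: "Suc m \<le> r" and dec: "decomp S [] a"
begin

text \<open>If some pebble already passes through the next vertex, the invariant provides the game
  there; otherwise no pebble lies in that component and the r rounds of the hypothesis suffice.\<close>

lemma ef_equiv_next_vertex:
  assumes reply: "partial_reply m x pa pa' a b" and j: "length b < length a"
  shows "ef_equiv V (Suc m) (component S (decomp_vertex S [] a (length b)))
    (local_pebbles (take (length b) a) pa) (component T (decomp_vertex S [] a (length b)))
    (local_pebbles b pa')"
proof (cases "\<exists>y c. pa y = Some c \<and> length b < length c \<and> take (length b) c = take (length b) a")
  case True
  then obtain y c where yc: "pa y = Some c" "length b < length c" "take (length b) c = take (length b) a"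
    by blast
  then have y: "y \<in> V" using comp_inv_Some_in(1)[OF inv] by blast
  then obtain c' where c': "pa' y = Some c'"
    using comp_inv_None_iff[OF inv y] yc(1) by (cases "pa' y") auto
  have "take (length b) c' = b"
    using partial_reply_take_iff[OF reply yc(1) c' le_refl] yc(3) by simp
  moreover have "decomp_vertex S [] c (length b) = decomp_vertex S [] a (length b)"
    using decomp_vertex_take yc(3) by metis
  ultimately show ?thesis
    using comp_inv_ef[OF inv yc(1) c' yc(2)] yc(3) by simp
next
  case False
  have "local_pebbles (take (length b) a) pa = (\<lambda>_. None)"
    using False j unfolding local_pebbles_eq_empty by auto
  moreover have "local_pebbles b pa' = (\<lambda>_. None)"
    unfolding local_pebbles_eq_empty
  proof (intro allI impI notI)
    fix y c' assume c': "pa' y = Some c'" and in_c': "length b < length c' \<and> take (length b) c' = b"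
    have y: "y \<in> V" using comp_inv_Some_in(2)[OF inv c'] .
    then obtain c where c: "pa y = Some c"
      using comp_inv_None_iff[OF inv y] c' by (cases "pa y") auto
    have "take (length b) a = take (length b) c"
      using partial_reply_take_iff[OF reply c c' le_refl] in_c' by simp
    moreover have "length b < length c"
      using comp_inv_length[OF inv c c'] in_c' by simp
    ultimately show False using False c by auto
  qed
  ultimately show ?thesis
    using ef_equiv_le[OF component_ef m_le] by simp
qed

lemma partial_reply_snoc_take_iff:
  assumes reply: "partial_reply m x pa pa' a b" and j: "length b < length a"
    and iso: "partial_iso V (component S (decomp_vertex S [] a (length b)))
      ((local_pebbles (take (length b) a) pa)(x:=Some (a ! length b)))
      (component T (decomp_vertex S [] a (length b))) ((local_pebbles b pa')(x:=Some p))"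
    and yc: "pa y = Some c" "pa' y = Some c'"
  shows "take (Suc (length b)) a = take (Suc (length b)) c \<longleftrightarrow> b @ [p] = take (Suc (length b)) c'"
proof -
  let ?j = "length b"
  have "y \<in> V" "y \<noteq> x" using comp_inv_Some_in(1)[OF inv yc(1)] yc(1) x(2) by auto
  have lc: "length c = length c'" using comp_inv_length[OF inv yc] .
  have prev: "take ?j a = take ?j c \<longleftrightarrow> b = take ?j c'"
    using partial_reply_take_iff[OF reply yc le_refl] by simp
  show ?thesis
  proof (cases "?j < length c")
    case False
    then have "take (Suc ?j) c = c" "take (Suc ?j) c' = c'"
      using lc by simp_all
    moreover have "length (take (Suc ?j) a) = Suc ?j" "length (b @ [p]) = Suc ?j"
      using j by simp_all
    ultimately show ?thesis using False lc by auto
  next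
    case True
    have "a ! ?j = c ! ?j \<longleftrightarrow> p = c' ! ?j" if "take ?j a = take ?j c"
    proof -
      have "take ?j c' = b" using prev that by simp
      then have py: "((local_pebbles (take ?j a) pa)(x:=Some (a ! ?j))) y = Some (c ! ?j)"
        "((local_pebbles b pa')(x:=Some p)) y = Some (c' ! ?j)"
        using local_pebbles_other[of pa y c ?j a, OF yc(1) True that[symmetric]]
          local_pebbles_other[of pa' y c' ?j b, OF yc(2)] j True lc \<open>y \<noteq> x\<close> by simp_all
      have px: "((local_pebbles (take ?j a) pa)(x:=Some (a ! ?j))) x = Some (a ! ?j)"
        "((local_pebbles b pa')(x:=Some p)) x = Some p"
        by simp_all
      show ?thesis
        by (rule partial_isoD(3)[OF iso x(1) \<open>y \<in> V\<close> px(1) py(1) px(2) py(2)])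
    qed
    moreover have "take (Suc ?j) a = take ?j a @ [a ! ?j]" "take (Suc ?j) c = take ?j c @ [c ! ?j]"
      "take (Suc ?j) c' = take ?j c' @ [c' ! ?j]"
      using j True lc by (simp_all add: take_Suc_conv_app_nth)
    moreover have "length (take ?j a) = length (take ?j c)" "length b = length (take ?j c')"
      using j True lc by simp_all
    ultimately show ?thesis using prev by auto
  qed
qed

lemma partial_reply_snoc:
  assumes reply: "partial_reply m x pa pa' a b" and j: "length b < length a"
    and move: "ef_equiv V m (component S (decomp_vertex S [] a (length b)))
      ((local_pebbles (take (length b) a) pa)(x:=Some (a ! length b)))
      (component T (decomp_vertex S [] a (length b))) ((local_pebbles b pa')(x:=Some p))"
  shows "partial_reply m x pa pa' a (b @ [p])"
  unfolding partial_reply_def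
proof (intro conjI allI impI)
  note iso = ef_equiv_partial_iso[OF move]
  fix i assume "i \<le> length (b @ [p])"
  then consider "i \<le> length b" | "i = Suc (length b)" by fastforce
  then show "decomp_vertex S [] a i = decomp_vertex T [] (b @ [p]) i"
  proof cases
    case 1
    then have "take i (b @ [p]) = take i b" by simp
    then show ?thesis using partial_reply_vertex[OF reply 1] decomp_vertex_take by metis
  next
    case 2
    have "component S (decomp_vertex S [] a (length b)) (a ! length b) =
        component T (decomp_vertex S [] a (length b)) p"
      using partial_iso_fun_upd_label[OF iso x(1)] .
    then show ?thesis
      unfolding 2 decomp_vertex_Suc[OF j] decomp_vertex_snoc[of T "[]" b p]
      using partial_reply_vertex[OF reply le_refl] by simp
  qed
next
  fix y c c' i assume yc: "pa y = Some c" "pa' y = Some c'" and "i \<le> length (b @ [p])"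
  then consider "i \<le> length b" | "i = Suc (length b)" by fastforce
  then show "take i a = take i c \<longleftrightarrow> take i (b @ [p]) = take i c'"
  proof cases
    case 1
    then show ?thesis using partial_reply_take_iff[OF reply yc 1] by simp
  next
    case 2
    then show ?thesis
      using partial_reply_snoc_take_iff[OF reply j ef_equiv_partial_iso[OF move] yc] by simp
  qed
next
  fix i assume "i < length (b @ [p])"
  then consider "i < length b" | "i = length b" by fastforce
  then show "ef_equiv V m
      (component S (decomp_vertex S [] a i)) ((local_pebbles (take i a) pa)(x:=Some (a!i)))
    (component T (decomp_vertex S [] a i)) ((local_pebbles (take i (b @ [p])) pa')(x:=Some ((b @ [p])!i)))"
  proof cases
    case 1
    then show ?thesis using partial_reply_ef[OF reply 1] by (simp add: nth_append)
  next
    case 2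
    then show ?thesis using move by simp
  qed
qed

lemma partial_reply_exists: "j \<le> length a \<Longrightarrow> \<exists>b. length b = j \<and> partial_reply m x pa pa' a b"
proof (induction j)
  case 0
  show ?case by (intro exI[of _ "[]"]) (simp add: partial_reply_def)
next
  case (Suc j)
  then obtain b where b: "length b = j" "partial_reply m x pa pa' a b" by auto
  have j: "length b < length a" using Suc.prems b(1) by simp
  have "component S (decomp_vertex S [] a j) (a ! j) \<noteq> None"
    using decomp_stepD[OF dec, of j] j b(1) unfolding decomp_step_def Let_def
    by (cases "Suc j < length a") auto
  then obtain p where "ef_equiv V m (component S (decomp_vertex S [] a j))
      ((local_pebbles (take j a) pa)(x:=Some (a ! j))) (component T (decomp_vertex S [] a j))
      ((local_pebbles b pa')(x:=Some p))"
    using ef_equiv_forth[OF ef_equiv_next_vertex[OF b(2) j] x(1)] b(1) by metis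
  then have "partial_reply m x pa pa' a (b @ [p])"
    using partial_reply_snoc[OF b(2) j] b(1) by simp
  then show ?case using b(1) by (intro exI[of _ "b @ [p]"]) simp
qed

end

context
  fixes m x pa pa' a b
  assumes inv: "comp_inv V S T (Suc m) pa pa'" and x: "x \<in> V" "pa x = None" "pa' x = None"
    and dec: "decomp S [] a" and reply: "partial_reply m x pa pa' a b" and len: "length b = length a"
begin

lemma full_reply_decomp: "decomp T [] b"
  unfolding decomp_iff
proof (intro conjI allI impI)
  show "b \<noteq> []" using decomp_not_Nil[OF dec] len by auto
next
  fix j assume "j < length b"
  then have j: "j < length a" using len by simp
  have "component S (decomp_vertex S [] a j) (a ! j) = component T (decomp_vertex S [] a j) (b ! j)"
    using partial_iso_fun_upd_label[OF ef_equiv_partial_iso[OF partial_reply_ef[OF reply]] x(1)] j len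
    by simp
  then show "decomp_step T [] b j"
    using decomp_stepD[OF dec j] partial_reply_vertex[OF reply, of j] j len sym_vertex_iff
    unfolding decomp_step_def Let_def by simp
qed

lemma full_reply_take_iff:
  assumes yc: "pa y = Some c" "pa' y = Some c'"
  shows "take j a = take j c \<longleftrightarrow> take j b = take j c'"
proof (cases "j \<le> length a")
  case True
  then show ?thesis using partial_reply_take_iff[OF reply yc] len by simp
next
  case False
  have "take j a = take j c \<longleftrightarrow> take (length a) a = take (length a) c"
    using take_decomp_eq_iff[OF dec comp_inv_decomp(1)[OF inv yc(1)], of j] False by simp
  also have "\<dots> \<longleftrightarrow> take (length a) b = take (length a) c'"
    using partial_reply_take_iff[OF reply yc, of "length a"] len by simp
  also have "\<dots> \<longleftrightarrow> take j b = take j c'"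
    using take_decomp_eq_iff[OF full_reply_decomp comp_inv_decomp(2)[OF inv yc(2)], of j] False len by simp
  finally show ?thesis .
qed

lemma full_reply_ef:
  assumes yc: "pa y = Some c" "pa' y = Some c'" and j: "j < length c"
  shows "ef_equiv V m (component S (decomp_vertex S [] c j)) (local_pebbles (take j c) (pa(x:=Some a)))
    (component T (decomp_vertex S [] c j)) (local_pebbles (take j c') (pa'(x:=Some b)))"
proof -
  have j': "j < length c'" using comp_inv_length[OF inv yc] j by simp
  note upd = local_pebbles_fun_upd_take[of pa x j c a, OF x(2) j]
    local_pebbles_fun_upd_take[of pa' x j c' b, OF x(3) j']
  show ?thesis
  proof (cases "j < length a \<and> take j a = take j c")
    case True
    then have "take j c = take j a" "take j c' = take j b" "j < length b"
      using full_reply_take_iff[OF yc, of j] len by auto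
    moreover have "decomp_vertex S [] c j = decomp_vertex S [] a j"
      by (rule decomp_vertex_take) (use True in simp)
    ultimately show ?thesis
      unfolding upd using conjunct1[OF True] partial_reply_ef[OF reply] len by simp
  next
    case False
    moreover have not_b: "\<not> (j < length b \<and> take j b = take j c')"
      using False full_reply_take_iff[OF yc, of j] len by simp
    ultimately show ?thesis
      unfolding upd if_not_P[OF False] if_not_P[OF not_b]
      using ef_equiv_Suc_imp[OF comp_inv_ef[OF inv yc j]] by blast
  qed
qed

lemma comp_inv_full_reply: "comp_inv V S T m (pa(x:=Some a)) (pa'(x:=Some b))"
proof (rule comp_invI)
  fix z c c' j
  assume zc: "(pa(x:=Some a)) z = Some c" "(pa'(x:=Some b)) z = Some c'"
  show "length c = length c'"
    using zc comp_inv_length[OF inv] len by (auto split: if_splits)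
  show "j < length c \<Longrightarrow> decomp_vertex S [] c j = decomp_vertex T [] c' j"
    using zc comp_inv_vertex[OF inv] partial_reply_vertex[OF reply] len by (auto split: if_splits)
  show "j < length c \<Longrightarrow> ef_equiv V m (component S (decomp_vertex S [] c j))
    (local_pebbles (take j c) (pa(x:=Some a))) (component T (decomp_vertex S [] c j))
    (local_pebbles (take j c') (pa'(x:=Some b)))"
  proof (cases "z = x")
    case True
    then show "j < length c \<Longrightarrow> ?thesis"
      using zc partial_reply_ef[OF reply] len local_pebbles_fun_upd_take[of pa x j a a, OF x(2)]
        local_pebbles_fun_upd_take[of pa' x j b b, OF x(3)] by simp
  qed (use zc full_reply_ef in auto)
next
  fix z y c c' d d' j
  assume zc: "(pa(x:=Some a)) z = Some c" "(pa'(x:=Some b)) z = Some c'"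
    and yd: "(pa(x:=Some a)) y = Some d" "(pa'(x:=Some b)) y = Some d'"
  consider "z = x" "y = x" | "z = x" "y \<noteq> x" | "z \<noteq> x" "y = x" | "z \<noteq> x" "y \<noteq> x"
    by blast
  then show "take j c = take j d \<longleftrightarrow> take j c' = take j d'"
  proof cases
    case 1
    then show ?thesis using zc yd by simp
  next
    case 2
    then show ?thesis using zc yd full_reply_take_iff[of y d d' j] by simp
  next
    case 3
    then show ?thesis using zc yd full_reply_take_iff[of z c c' j] by (simp, metis)
  next
    case 4
    then show ?thesis using zc yd comp_inv_take_iff[OF inv] by simp
  qed
qed (use comp_inv_outside[OF inv] comp_inv_None_iff[OF inv] comp_inv_decomp[OF inv] x dec full_reply_decomp
  in \<open>auto split: if_splits\<close>)

end

lemma comp_inv_forth: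
  assumes inv: "comp_inv V S T (Suc m) pa pa'" and x: "x \<in> V" and m_le: "Suc m \<le> r"
    and dec: "decomp S [] a"
  obtains b where "decomp T [] b" "comp_inv V S T m (pa(x:=Some a)) (pa'(x:=Some b))"
proof -
  define pa0 where "pa0 = pa(x:=None)"
  define pa0' where "pa0' = pa'(x:=None)"
  have inv0: "comp_inv V S T (Suc m) pa0 pa0'"
    unfolding pa0_def pa0'_def using comp_inv_unpebble[OF inv] .
  have x0: "pa0 x = None" "pa0' x = None"
    unfolding pa0_def pa0'_def by simp_all
  obtain b where "length b = length a" "partial_reply m x pa0 pa0' a b"
    using partial_reply_exists[OF inv0 x x0(1) m_le dec le_refl] by blast
  moreover have "pa0(x:=Some a) = pa(x:=Some a)" "pa0'(x:=Some b) = pa'(x:=Some b)"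
    unfolding pa0_def pa0'_def by simp_all
  ultimately show ?thesis
    using that full_reply_decomp[OF inv0 x x0 dec] comp_inv_full_reply[OF inv0 x x0 dec] by metis
qed

end

lemma flat_concat_decomp_not_None: "proper_ttree S \<Longrightarrow> decomp S [] a \<Longrightarrow> flat S (concat a) \<noteq> None"
  using flat_concat_decomp decomp_label_not_None by metis

lemma (in componentwise_ef) ef_equiv_flat_forth:
  assumes "comp_inv V S T (Suc m) pa pa'" "Suc m \<le> r" "x \<in> V" "flat S w \<noteq> None"
  obtains a b where "concat a = w" "flat T (concat b) \<noteq> None"
    "comp_inv V S T m (pa(x:=Some a)) (pa'(x:=Some b))"
proof -
  obtain a where a: "decomp S [] a" "concat a = w"
    using flat_imp_decomp[OF assms(4)] by blast
  obtain b where "decomp T [] b" "comp_inv V S T m (pa(x:=Some a)) (pa'(x:=Some b))"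
    using comp_inv_forth[OF assms(1,3,2) a(1)] .
  then show ?thesis
    using that a(2) flat_concat_decomp_not_None[OF proper_T] by blast
qed

lemma ef_equiv_flat_of_comp_inv:
  assumes "componentwise_ef V r S T" "comp_inv V S T m pa pa'" "m \<le> r"
  shows "ef_equiv V m (flat S) (flat_pebbles pa) (flat T) (flat_pebbles pa')"
  using assms
proof (induction m arbitrary: S T pa pa')
  case 0
  then interpret componentwise_ef V r S T by simp
  show ?case using partial_iso_flat[OF proper_S proper_T 0(2)] by simp
next
  case (Suc m)
  interpret componentwise_ef V r S T by fact
  show ?case
  proof (rule ef_equiv_SucI)
    show "partial_iso V (flat S) (flat_pebbles pa) (flat T) (flat_pebbles pa')"
      using partial_iso_flat[OF proper_S proper_T Suc.prems(2)] .
  next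
    fix x w assume "x \<in> V" "flat S w \<noteq> None"
    then obtain a b where ab: "concat a = w" "flat T (concat b) \<noteq> None"
      "comp_inv V S T m (pa(x:=Some a)) (pa'(x:=Some b))"
      using ef_equiv_flat_forth[OF Suc.prems(2,3)] by blast
    have "ef_equiv V m (flat S) (flat_pebbles (pa(x:=Some a))) (flat T) (flat_pebbles (pa'(x:=Some b)))"
      by (rule Suc.IH[OF Suc.prems(1) ab(3)]) (use Suc.prems(3) in simp)
    then show "\<exists>w'. flat T w' \<noteq> None \<and>
        ef_equiv V m (flat S) ((flat_pebbles pa)(x := Some w)) (flat T) ((flat_pebbles pa')(x := Some w'))"
      using ab(1,2) by (intro exI[of _ "concat b"]) (simp add: flat_pebbles_fun_upd)
  next
    fix x w' assume "x \<in> V" "flat T w' \<noteq> None"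
    then obtain a b where ab: "concat b = w'" "flat S (concat a) \<noteq> None"
      "comp_inv V T S m (pa'(x:=Some b)) (pa(x:=Some a))"
      using componentwise_ef.ef_equiv_flat_forth[OF componentwise_ef_swap comp_inv_swap[OF Suc.prems(2)]
        Suc.prems(3)] by blast
    have "ef_equiv V m (flat S) (flat_pebbles (pa(x:=Some a))) (flat T) (flat_pebbles (pa'(x:=Some b)))"
      by (rule Suc.IH[OF Suc.prems(1) comp_inv_swap[OF ab(3)]]) (use Suc.prems(3) in simp)
    then show "\<exists>w. flat S w \<noteq> None \<and>
        ef_equiv V m (flat S) ((flat_pebbles pa)(x := Some w)) (flat T) ((flat_pebbles pa')(x := Some w'))"
      using ab(1,2) by (intro exI[of _ "concat a"]) (simp add: flat_pebbles_fun_upd)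
  qed
qed

lemma comp_inv_unpebbled: "comp_inv V S T m (\<lambda>_. None) (\<lambda>_. None)"
  unfolding comp_inv_def by simp

lemma ef_equiv_flat:
  assumes "componentwise_ef V r S T"
  shows "ef_equiv V r (flat S) (\<lambda>_. None) (flat T) (\<lambda>_. None)"
  using ef_equiv_flat_of_comp_inv[OF assms comp_inv_unpebbled le_refl] unfolding flat_pebbles_def by simp

section \<open>Compositionality of FO\<close>

definition fo_vars :: "(nat \<times> 'a fo) set \<Rightarrow> nat set" where
  "fo_vars F = insert 0 (\<Union>p\<in>F. bvars (snd p))"

definition fo_rank :: "(nat \<times> 'a fo) set \<Rightarrow> nat" where
  "fo_rank F = Suc (\<Sum>p\<in>F. qrank (snd p))"

text \<open>The witness \<open>\<Delta>\<close> for a finite set F of sentences.  The extra variable 0 and the extra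
  round only make sure that Hintikka sentences exist (nonempty V, positive rank).\<close>

definition FO_bounded :: "('c \<times> nat) set \<Rightarrow> (nat \<times> ('c \<times> nat) fo) set \<Rightarrow> (nat \<times> ('c \<times> nat) fo) set" where
  "FO_bounded Sig F = {p \<in> FO Sig. qrank (snd p) \<le> fo_rank F \<and> bvars (snd p) \<subseteq> fo_vars F}"

lemma finite_fo_vars: "finite F \<Longrightarrow> finite (fo_vars F)"
  unfolding fo_vars_def using finite_bvars by auto

lemma subset_FO_bounded:
  assumes "finite F" "F \<subseteq> FO Sig"
  shows "F \<subseteq> FO_bounded Sig F"
proof
  fix p assume p: "p \<in> F"
  have "qrank (snd p) \<le> (\<Sum>q\<in>F. qrank (snd q))"
    using p assms(1) by (intro member_le_sum) auto
  then show "p \<in> FO_bounded Sig F"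
    using p assms(2) unfolding FO_bounded_def fo_rank_def fo_vars_def by auto
qed

lemma (in hintikka) FO_bounded_if_in_fragment:
  assumes "in_fragment m {} \<chi>" "m \<le> fo_rank F" "V \<subseteq> fo_vars F"
  shows "(n, \<chi>) \<in> FO_bounded Sig F"
  using assms unfolding in_fragment_def FO_bounded_def FO_def by auto

lemma hintikka_FO_bounded:
  assumes "finite Sig" "finite F"
  obtains H where "finite H" "\<And>\<chi>. \<chi> \<in> H \<Longrightarrow> (n, \<chi>) \<in> FO_bounded Sig F"
    "\<And>t. wf_tree lin Sig n t \<Longrightarrow> \<exists>\<chi>\<in>H. models t \<chi>"
    "\<And>\<chi> t t'. \<chi> \<in> H \<Longrightarrow> wf_tree lin Sig n t \<Longrightarrow> wf_tree lin Sig n t' \<Longrightarrow> models t \<chi> \<Longrightarrow> models t' \<chi> \<Longrightarrow>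
        ef_equiv (fo_vars F) (fo_rank F) t (\<lambda>_. None) t' (\<lambda>_. None)"
proof -
  interpret hintikka lin Sig n "fo_vars F"
  proof unfold_locales
    show "finite (fo_vars F)" using assms(2) by (rule finite_fo_vars)
    show "fo_vars F \<noteq> {}" unfolding fo_vars_def by simp
  qed (rule assms(1))
  obtain H where H: "finite H" "\<And>\<chi>. \<chi> \<in> H \<Longrightarrow> in_fragment (fo_rank F) {} \<chi>"
    "\<And>t. wf_tree lin Sig n t \<Longrightarrow> \<exists>\<chi>\<in>H. models t \<chi>"
    "\<And>\<chi> t t'. \<chi> \<in> H \<Longrightarrow> wf_tree lin Sig n t \<Longrightarrow> wf_tree lin Sig n t' \<Longrightarrow>
        models t \<chi> \<Longrightarrow> models t' \<chi> \<Longrightarrow> ef_equiv (fo_vars F) (fo_rank F) t (\<lambda>_. None) t' (\<lambda>_. None)"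
    using hintikka_sentences[of "fo_rank F"] unfolding fo_rank_def by blast
  show ?thesis
    by (rule that[OF H(1) FO_bounded_if_in_fragment[OF H(2) le_refl subset_refl] H(3,4)])
qed

lemma models_FO_bounded_iff:
  assumes "(n, \<phi>) \<in> FO_bounded Sig F" "ef_equiv (fo_vars F) (fo_rank F) t (\<lambda>_. None) t' (\<lambda>_. None)"
  shows "models t \<phi> \<longleftrightarrow> models t' \<phi>"
  using assms by (intro ef_equiv_models_iff) (auto simp: FO_bounded_def FO_def)

text \<open>Up to equivalence, every sentence of \<open>FO_bounded\<close> is a disjunction of Hintikka sentences.\<close>

lemma finite_FO_bounded_classes:
  assumes "finite Sig" "finite F"
  shows "finite ((\<lambda>(m, \<phi>). mods lin Sig n \<phi>) ` {p \<in> FO_bounded Sig F. fst p = n})"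
proof -
  obtain H where H: "finite H" "\<And>t. wf_tree lin Sig n t \<Longrightarrow> \<exists>\<chi>\<in>H. models t \<chi>"
    "\<And>\<chi> t t'. \<chi> \<in> H \<Longrightarrow> wf_tree lin Sig n t \<Longrightarrow> wf_tree lin Sig n t' \<Longrightarrow> models t \<chi> \<Longrightarrow> models t' \<chi> \<Longrightarrow>
        ef_equiv (fo_vars F) (fo_rank F) t (\<lambda>_. None) t' (\<lambda>_. None)"
    using hintikka_FO_bounded[OF assms] by metis
  have "mods lin Sig n \<phi> = \<Union>(mods lin Sig n ` {\<chi>\<in>H. \<exists>t\<in>mods lin Sig n \<chi>. models t \<phi>})"
    if \<phi>: "(n, \<phi>) \<in> FO_bounded Sig F" for \<phi>
  proof
    show "mods lin Sig n \<phi> \<subseteq> \<Union>(mods lin Sig n ` {\<chi>\<in>H. \<exists>t\<in>mods lin Sig n \<chi>. models t \<phi>})"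
      using H(2) unfolding mods_def by fastforce
  next
    show "\<Union>(mods lin Sig n ` {\<chi>\<in>H. \<exists>t\<in>mods lin Sig n \<chi>. models t \<phi>}) \<subseteq> mods lin Sig n \<phi>"
    proof
      fix t assume "t \<in> \<Union>(mods lin Sig n ` {\<chi>\<in>H. \<exists>t\<in>mods lin Sig n \<chi>. models t \<phi>})"
      then obtain \<chi> t0 where "\<chi> \<in> H" "t \<in> mods lin Sig n \<chi>" "t0 \<in> mods lin Sig n \<chi>" "models t0 \<phi>"
        by blast
      then show "t \<in> mods lin Sig n \<phi>"
        using H(3) models_FO_bounded_iff[OF \<phi>] unfolding mods_def by blast
    qed
  qed
  then have "(\<lambda>(m, \<phi>). mods lin Sig n \<phi>) ` {p \<in> FO_bounded Sig F. fst p = n}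
      \<subseteq> (\<lambda>G. \<Union>(mods lin Sig n ` G)) ` Pow H"
    by fastforce
  then show ?thesis
    using H(1) by (meson finite_Pow_iff finite_imageI finite_subset)
qed

lemma component_ef_if_cls_le:
  assumes "finite Sig" "finite F"
    and S: "wf_tree lin (trees_sorted lin Sig) n S" and T: "wf_tree lin (trees_sorted lin Sig) n T"
    and le: "rel_option (rel_lab (cls_le (FO_bounded Sig F)))
               (map_option (map_lab (\<lambda>(s, k). (qcls lin Sig (FO_bounded Sig F) k s, k))) (S u))
               (map_option (map_lab (\<lambda>(s, k). (qcls lin Sig (FO_bounded Sig F) k s, k))) (T u))"
  shows "(sym_vertex S u \<longleftrightarrow> sym_vertex T u) \<and>
    ef_equiv (fo_vars F) (fo_rank F) (component S u) (\<lambda>_. None) (component T u) (\<lambda>_. None)"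
proof (cases "S u")
  case None
  then have "T u = None" using le by (cases "T u") auto
  then show ?thesis using None by (simp add: sym_vertex_def component_None ef_equiv_refl)
next
  case (Some l)
  then obtain l' where Tu: "T u = Some l'" using le by (cases "T u") auto
  show ?thesis
  proof (cases l)
    case (Var j)
    then have "l' = Var j" using le Some Tu by (cases l') auto
    then show ?thesis using Some Tu Var by (simp add: sym_vertex_def component_Var ef_equiv_refl)
  next
    case (Sym a)
    obtain s k s' k' where Su: "S u = Some (Sym (s, k))" and Tu': "T u = Some (Sym (s', k'))"
      and cl: "cls_le (FO_bounded Sig F) (qcls lin Sig (FO_bounded Sig F) k s, k)
        (qcls lin Sig (FO_bounded Sig F) k' s', k')"
      using le Some Sym Tu by (cases l'; cases a) auto
    then have "k' = k" unfolding cls_le_def by simp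
    then obtain s0 t0 where st: "s0 \<in> qcls lin Sig (FO_bounded Sig F) k s"
      "t0 \<in> qcls lin Sig (FO_bounded Sig F) k s'"
      "sq (FO_bounded Sig F) k s0 t0"
      using cl unfolding cls_le_def by auto
    have wf: "wf_tree lin Sig k s" "wf_tree lin Sig k s'"
      using wf_tree_trees_sorted_Sym[OF S Su] wf_tree_trees_sorted_Sym[OF T Tu'] \<open>k' = k\<close> by simp_all
    obtain H where H: "\<And>\<chi>. \<chi> \<in> H \<Longrightarrow> (k, \<chi>) \<in> FO_bounded Sig F"
      "\<And>t. wf_tree lin Sig k t \<Longrightarrow> \<exists>\<chi>\<in>H. models t \<chi>"
      "\<And>\<chi> t t'. \<chi> \<in> H \<Longrightarrow> wf_tree lin Sig k t \<Longrightarrow> wf_tree lin Sig k t' \<Longrightarrow> models t \<chi> \<Longrightarrow> models t' \<chi> \<Longrightarrow>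
        ef_equiv (fo_vars F) (fo_rank F) t (\<lambda>_. None) t' (\<lambda>_. None)"
      using hintikka_FO_bounded[OF assms(1,2)] by metis
    obtain \<chi> where \<chi>: "\<chi> \<in> H" "models s \<chi>" using H(2)[OF wf(1)] by blast
    then have "models s' \<chi>"
      using st H(1)[OF \<chi>(1)] unfolding qcls_def sq_def by blast
    then show ?thesis
      using H(3)[OF \<chi>(1) wf \<chi>(2)] Su Tu' \<open>k' = k\<close> by (simp add: sym_vertex_def component_Sym)
  qed
qed

lemma congruence_ordering_FO_bounded:
  assumes "finite Sig" "finite F"
  shows "congruence_ordering lin Sig (FO_bounded Sig F)"
  unfolding congruence_ordering_def
proof (intro allI impI)
  fix n S T
  assume S: "wf_tree lin (trees_sorted lin Sig) n S" and T: "wf_tree lin (trees_sorted lin Sig) n T"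
    and le: "tree_le (cls_le (FO_bounded Sig F))
      (map_tree (\<lambda>(s, k). (qcls lin Sig (FO_bounded Sig F) k s, k)) S)
                                     (map_tree (\<lambda>(s, k). (qcls lin Sig (FO_bounded Sig F) k s, k)) T)"
  have "componentwise_ef (fo_vars F) (fo_rank F) S T"
    using wf_tree_proper_ttree[OF S] wf_tree_proper_ttree[OF T]
      component_ef_if_cls_le[OF assms S T] le unfolding tree_le_def map_tree_def
    by unfold_locales blast+
  then have "ef_equiv (fo_vars F) (fo_rank F) (flat S) (\<lambda>_. None) (flat T) (\<lambda>_. None)"
    by (rule ef_equiv_flat)
  then show "sq (FO_bounded Sig F) n (flat S) (flat T)"
    unfolding sq_def using models_FO_bounded_iff by blast
qed

lemma compositional_FO: "compositional lin FO"
  unfolding compositional_def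
proof (intro allI impI)
  fix \<Phi> :: "('c \<times> nat) set \<Rightarrow> (nat \<times> ('c \<times> nat) fo) set"
  assume \<Phi>: "\<forall>Sig. finite Sig \<longrightarrow> finite (\<Phi> Sig) \<and> \<Phi> Sig \<subseteq> FO Sig"
  show "\<exists>\<Delta>. \<forall>Sig. finite Sig \<longrightarrow> \<Phi> Sig \<subseteq> \<Delta> Sig \<and> \<Delta> Sig \<subseteq> FO Sig \<and>
      (\<forall>n. finite ((\<lambda>(m, \<phi>). mods lin Sig n \<phi>) ` {p \<in> \<Delta> Sig. fst p = n})) \<and>
      congruence_ordering lin Sig (\<Delta> Sig)"
  proof (intro exI[of _ "\<lambda>Sig. FO_bounded Sig (\<Phi> Sig)"] allI impI conjI)
    fix Sig :: "('c \<times> nat) set" assume Sig: "finite Sig"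
    then have \<Phi>_Sig: "finite (\<Phi> Sig)" "\<Phi> Sig \<subseteq> FO Sig" using \<Phi> by auto
    then show "\<Phi> Sig \<subseteq> FO_bounded Sig (\<Phi> Sig)" by (rule subset_FO_bounded)
    show "FO_bounded Sig (\<Phi> Sig) \<subseteq> FO Sig" unfolding FO_bounded_def by auto
    show "\<And>n. finite ((\<lambda>(m, \<phi>). mods lin Sig n \<phi>) ` {p \<in> FO_bounded Sig (\<Phi> Sig). fst p = n})"
      using finite_FO_bounded_classes[OF Sig \<Phi>_Sig(1)] .
    show "congruence_ordering lin Sig (FO_bounded Sig (\<Phi> Sig))"
      using congruence_ordering_FO_bounded[OF Sig \<Phi>_Sig(1)] .
  qed
qed

theorem theorem10p5:
  shows "compositional False (FO :: ('c \<times> nat) set \<Rightarrow> _) \<and> compositional True (FO :: ('c \<times> nat) set \<Rightarrow> _)"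
  using compositional_FO by blast

end
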